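(* $\{\omega, \omega^\star\} \leq_c \{\omega^\omega, (\omega^\omega)^\star\}$.
   Context: Structures have domains contained in $\omega$. For countable structures $\mathcal{A},\mathcal{B}$, the class $\{\mathcal{A},\mathcal{B}\}$ denotes the class of all structures (with domain $\subseteq\omega$) isomorphic to $\mathcal{A}$ or to $\mathcal{B}$. Linear orders are in the language $\{<\}$; $L^\star$ is the reverse of a linear order $L$; $\omega^\omega$ denotes ordinal exponentiation (as an order type). An enumeration operator $\Gamma$ is a c.e. set of pairs $(\alpha,\varphi)$ with $\alpha$ a finite set of basic (atomic or negated atomic) sentences of the input language with constants from $\omega$ and $\varphi$ a basic sentence of the output language with constants from $\omega$; $\Gamma(X)=\{\varphi : (\alpha,\varphi)\in\Gamma,\ \alpha\subseteq X\}$. $\Gamma$ is a computable embedding of $\mathcal{K}_0$ into $\mathcal{K}_1$ ($\mathcal{K}_0\leq_c\mathcal{K}_1$) if for every $\mathcal{A}\in\mathcal{K}_0$, $\Gamma$ applied to the atomic diagram of $\mathcal{A}$ is the atomic diagram of a structure $\Gamma(\mathcal{A})\in\mathcal{K}_1$, and for all $\mathcal{A},\mathcal{B}\in\mathcal{K}_0$, $\mathcal{A}\cong\mathcal{B}$ iff $\Gamma(\mathcal{A})\cong\Gamma(\mathcal{B})$. *)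

theory Defs
  imports Main "HOL-Library.Nat_Bijection"
begin

inductive prim_rec :: "nat \<Rightarrow> (nat list \<Rightarrow> nat) \<Rightarrow> bool" where
  pr_zero: "prim_rec n (\<lambda>_. 0)"
| pr_succ: "prim_rec 1 (\<lambda>xs. Suc (hd xs))"
| pr_proj: "i < n \<Longrightarrow> prim_rec n (\<lambda>xs. xs ! i)"
| pr_comp: "prim_rec m g \<Longrightarrow> length gs = m \<Longrightarrow> (\<forall>h\<in>set gs. prim_rec n h)
            \<Longrightarrow> prim_rec n (\<lambda>xs. g (map (\<lambda>h. h xs) gs))"
| pr_rec: "prim_rec n g \<Longrightarrow> prim_rec (Suc (Suc n)) h
            \<Longrightarrow> prim_rec (Suc n) (\<lambda>xs. rec_nat (g (tl xs)) (\<lambda>k r. h (k # r # tl xs)) (hd xs))"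

text \<open>Computably enumerable sets of naturals (Kleene normal form: projection of a
  primitive recursive relation).\<close>
definition ce :: "nat set \<Rightarrow> bool" where
  "ce S \<longleftrightarrow> (\<exists>g. prim_rec 2 g \<and> S = {x. \<exists>y. g [x, y] = 0})"

datatype atom = Lt nat nat | Eq nat nat
datatype basic = Pos atom | Neg atom

fun atom_code :: "atom \<Rightarrow> nat" where
  "atom_code (Lt a b) = 2 * prod_encode (a, b)"
| "atom_code (Eq a b) = 2 * prod_encode (a, b) + 1"

fun basic_code :: "basic \<Rightarrow> nat" where
  "basic_code (Pos a) = 2 * atom_code a"
| "basic_code (Neg a) = 2 * atom_code a + 1"

definition pair_code :: "basic set \<times> basic \<Rightarrow> nat" where
  "pair_code p = prod_encode (set_encode (basic_code ` fst p), basic_code (snd p))"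

type_synonym struc = "nat set \<times> (nat \<times> nat) set"

definition is_struc :: "struc \<Rightarrow> bool" where
  "is_struc S \<longleftrightarrow> snd S \<subseteq> fst S \<times> fst S"

definition diag :: "struc \<Rightarrow> basic set" where
  "diag S =
     {Pos (Eq a a) | a. a \<in> fst S}
   \<union> {Neg (Eq a b) | a b. a \<in> fst S \<and> b \<in> fst S \<and> a \<noteq> b}
   \<union> {Pos (Lt a b) | a b. (a, b) \<in> snd S}
   \<union> {Neg (Lt a b) | a b. a \<in> fst S \<and> b \<in> fst S \<and> (a, b) \<notin> snd S}"

definition struc_iso :: "struc \<Rightarrow> struc \<Rightarrow> bool" where
  "struc_iso A B \<longleftrightarrow> (\<exists>f. bij_betw f (fst A) (fst B) \<and>
     (\<forall>x\<in>fst A. \<forall>y\<in>fst A. (x, y) \<in> snd A \<longleftrightarrow> (f x, f y) \<in> snd B))"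

definition iso_to :: "struc \<Rightarrow> 'a set \<Rightarrow> ('a \<Rightarrow> 'a \<Rightarrow> bool) \<Rightarrow> bool" where
  "iso_to S C lt \<longleftrightarrow> (\<exists>f. bij_betw f (fst S) C \<and>
     (\<forall>x\<in>fst S. \<forall>y\<in>fst S. (x, y) \<in> snd S \<longleftrightarrow> lt (f x) (f y)))"

definition cls2 :: "'a set \<Rightarrow> ('a \<Rightarrow> 'a \<Rightarrow> bool) \<Rightarrow> 'b set \<Rightarrow> ('b \<Rightarrow> 'b \<Rightarrow> bool) \<Rightarrow> struc set" where
  "cls2 C1 lt1 C2 lt2 = {S. is_struc S \<and> (iso_to S C1 lt1 \<or> iso_to S C2 lt2)}"

text \<open>omega^omega via the definition of ordinal exponentiation: finitely supported functions
  omega \<Rightarrow> omega, ordered antilexicographically (compare at the largest differing argument).\<close>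
definition omega_omega :: "(nat \<Rightarrow> nat) set" where
  "omega_omega = {f. finite {n. f n \<noteq> 0}}"

definition oo_less :: "(nat \<Rightarrow> nat) \<Rightarrow> (nat \<Rightarrow> nat) \<Rightarrow> bool" where
  "oo_less f g \<longleftrightarrow> (\<exists>n. f n < g n \<and> (\<forall>m>n. f m = g m))"

definition enum_op :: "(basic set \<times> basic) set \<Rightarrow> bool" where
  "enum_op \<Gamma> \<longleftrightarrow> (\<forall>p\<in>\<Gamma>. finite (fst p)) \<and> ce (pair_code ` \<Gamma>)"

definition enum_apply :: "(basic set \<times> basic) set \<Rightarrow> basic set \<Rightarrow> basic set" where
  "enum_apply \<Gamma> X = {\<phi>. \<exists>\<alpha>. (\<alpha>, \<phi>) \<in> \<Gamma> \<and> \<alpha> \<subseteq> X}"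

definition computable_embedding :: "(basic set \<times> basic) set \<Rightarrow> struc set \<Rightarrow> struc set \<Rightarrow> bool" where
  "computable_embedding \<Gamma> K0 K1 \<longleftrightarrow> enum_op \<Gamma> \<and>
     (\<forall>A\<in>K0. \<exists>B\<in>K1. enum_apply \<Gamma> (diag A) = diag B) \<and>
     (\<forall>A\<in>K0. \<forall>B\<in>K0. \<forall>A' B'. is_struc A' \<longrightarrow> is_struc B' \<longrightarrow>
        enum_apply \<Gamma> (diag A) = diag A' \<longrightarrow> enum_apply \<Gamma> (diag B) = diag B' \<longrightarrow>
        (struc_iso A B \<longleftrightarrow> struc_iso A' B'))"

definition c_reducible :: "struc set \<Rightarrow> struc set \<Rightarrow> bool" (infix "\<le>\<^sub>c" 50) where
  "K0 \<le>\<^sub>c K1 \<longleftrightarrow> (\<exists>\<Gamma>. computable_embedding \<Gamma> K0 K1)"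

end

theory Submission
  imports Defs "HOL-Library.Multiset_Order"
begin

text \<open>The operator \<open>\<Gamma>\<close> sends a linear order \<open>L\<close> on \<open>D \<subseteq> \<omega>\<close> to \<open>\<Sum>\<^sub>a\<^sub>\<in>\<^sub>L L\<^bsup>a\<^esup>\<close>,
  realised on codes of words \<open>a b\<^sub>1 \<dots> b\<^sub>a\<close> over \<open>D\<close> ordered lexicographically by \<open>L\<close>. The
  length of a word is read off the code of its first letter, not off its position in \<open>L\<close>, so
  every basic fact about two words is decided by finitely many basic facts about their letters,
  and \<open>\<Gamma>\<close> is c.e. If \<open>L \<cong> \<omega>\<close> and \<open>g n\<close> is the letter at position \<open>n\<close>, the image is
  \<open>\<Sum>\<^sub>n \<omega>\<^bsup>g n\<^esup>\<close> with \<open>g\<close> injective, hence unbounded; it embeds into \<open>\<omega>\<^sup>\<omega>\<close> and conversely, so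
  it is \<open>\<omega>\<^sup>\<omega>\<close> by Schroeder--Bernstein for well-orders. Reversing \<open>L\<close> reverses the image.
  Since \<open>\<omega>\<close> and \<open>\<omega>\<^sup>\<omega>\<close> have a least but no greatest element, neither is isomorphic to its
  reverse, so \<open>\<Gamma>\<close> preserves and reflects isomorphism.\<close>

section \<open>Primitive recursive functions\<close>

text \<open>\<open>F\<close> is primitive recursive as an \<open>n\<close>-ary function: its values on argument lists of
  any other length are irrelevant, which makes the notion closed under pointwise rewriting.\<close>
definition prim_rec_ext :: "nat \<Rightarrow> (nat list \<Rightarrow> nat) \<Rightarrow> bool" where
  "prim_rec_ext n F \<longleftrightarrow> (\<exists>f. prim_rec n f \<and> (\<forall>xs. length xs = n \<longrightarrow> f xs = F xs))"

lemma prim_rec_ext_cong: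
  "prim_rec_ext n F \<Longrightarrow> (\<And>xs. length xs = n \<Longrightarrow> F xs = G xs) \<Longrightarrow> prim_rec_ext n G"
  unfolding prim_rec_ext_def by metis

lemma prim_rec_ext_zero: "prim_rec_ext n (\<lambda>_. 0)"
  unfolding prim_rec_ext_def using pr_zero by blast

lemma prim_rec_ext_succ: "prim_rec_ext 1 (\<lambda>xs. Suc (hd xs))"
  unfolding prim_rec_ext_def using pr_succ by blast

lemma prim_rec_ext_proj: "i < n \<Longrightarrow> prim_rec_ext n (\<lambda>xs. xs ! i)"
  unfolding prim_rec_ext_def using pr_proj by blast

lemma prim_rec_ext_comp:
  assumes "prim_rec_ext m G" "length Hs = m" "\<forall>H\<in>set Hs. prim_rec_ext n H"
  shows "prim_rec_ext n (\<lambda>xs. G (map (\<lambda>H. H xs) Hs))"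
proof -
  obtain g where g: "prim_rec m g" "\<forall>xs. length xs = m \<longrightarrow> g xs = G xs"
    using assms(1) unfolding prim_rec_ext_def by auto
  have "\<exists>hs. length hs = length Hs \<and> (\<forall>h\<in>set hs. prim_rec n h)
     \<and> (\<forall>xs. length xs = n \<longrightarrow> map (\<lambda>h. h xs) hs = map (\<lambda>H. H xs) Hs)"
    using assms(3)
  proof (induction Hs)
    case (Cons H Hs)
    then obtain hs where "length hs = length Hs" "\<forall>h\<in>set hs. prim_rec n h"
      "\<forall>xs. length xs = n \<longrightarrow> map (\<lambda>h. h xs) hs = map (\<lambda>H. H xs) Hs" by auto
    moreover obtain h where "prim_rec n h" "\<forall>xs. length xs = n \<longrightarrow> h xs = H xs"
      using Cons.prems unfolding prim_rec_ext_def by auto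
    ultimately show ?case by (intro exI[of _ "h # hs"]) auto
  qed simp
  then obtain hs where hs: "length hs = length Hs" "\<forall>h\<in>set hs. prim_rec n h"
    "\<forall>xs. length xs = n \<longrightarrow> map (\<lambda>h. h xs) hs = map (\<lambda>H. H xs) Hs" by blast
  have "prim_rec n (\<lambda>xs. g (map (\<lambda>h. h xs) hs))"
    by (rule pr_comp) (use g hs assms(2) in auto)
  moreover have "\<forall>xs. length xs = n \<longrightarrow> g (map (\<lambda>h. h xs) hs) = G (map (\<lambda>H. H xs) Hs)"
    using g hs assms(2) by (metis length_map)
  ultimately show ?thesis unfolding prim_rec_ext_def by blast
qed

lemma prim_rec_ext_rec:
  assumes "prim_rec_ext n G" "prim_rec_ext (Suc (Suc n)) H"
  shows "prim_rec_ext (Suc n) (\<lambda>xs. rec_nat (G (tl xs)) (\<lambda>k r. H (k # r # tl xs)) (hd xs))"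
proof -
  obtain g where g: "prim_rec n g" "\<forall>xs. length xs = n \<longrightarrow> g xs = G xs"
    using assms(1) unfolding prim_rec_ext_def by auto
  obtain h where h: "prim_rec (Suc (Suc n)) h" "\<forall>xs. length xs = Suc (Suc n) \<longrightarrow> h xs = H xs"
    using assms(2) unfolding prim_rec_ext_def by auto
  have "prim_rec (Suc n) (\<lambda>xs. rec_nat (g (tl xs)) (\<lambda>k r. h (k # r # tl xs)) (hd xs))"
    by (rule pr_rec) (use g h in auto)
  moreover have "rec_nat (g (tl xs)) (\<lambda>k r. h (k # r # tl xs)) m
      = rec_nat (G (tl xs)) (\<lambda>k r. H (k # r # tl xs)) m" if "length xs = Suc n" for xs m
    using that g h by (induction m) auto
  ultimately show ?thesis unfolding prim_rec_ext_def by blast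
qed

lemma prim_rec_ext_arg0: "0 < n \<Longrightarrow> prim_rec_ext n hd"
  by (rule prim_rec_ext_cong[OF prim_rec_ext_proj[of 0 n]]) (auto simp: hd_conv_nth)

lemma prim_rec_ext_arg1: "1 < n \<Longrightarrow> prim_rec_ext n (\<lambda>xs. hd (tl xs))"
  by (rule prim_rec_ext_cong[OF prim_rec_ext_proj[of 1 n]])
    (auto simp: hd_conv_nth nth_tl neq_Nil_conv length_Suc_conv Suc_less_eq2)

lemma prim_rec_ext_arg2: "2 < n \<Longrightarrow> prim_rec_ext n (\<lambda>xs. hd (tl (tl xs)))"
  by (rule prim_rec_ext_cong[OF prim_rec_ext_proj[of 2 n]])
    (auto simp: numeral_2_eq_2 Suc_less_eq2 length_Suc_conv hd_conv_nth)

lemma prim_rec_ext_compose1: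
  assumes "prim_rec_ext 1 (\<lambda>xs. f (hd xs))" "prim_rec_ext n F"
  shows "prim_rec_ext n (\<lambda>xs. f (F xs))"
  using prim_rec_ext_comp[OF assms(1), of "[F]" n] assms(2) by simp

lemma prim_rec_ext_compose2:
  assumes "prim_rec_ext 2 (\<lambda>xs. f (hd xs) (hd (tl xs)))" "prim_rec_ext n F" "prim_rec_ext n G"
  shows "prim_rec_ext n (\<lambda>xs. f (F xs) (G xs))"
  using prim_rec_ext_comp[OF assms(1), of "[F, G]" n] assms(2,3) by simp

lemma prim_rec_ext_Suc: "prim_rec_ext n F \<Longrightarrow> prim_rec_ext n (\<lambda>xs. Suc (F xs))"
  by (rule prim_rec_ext_compose1[OF prim_rec_ext_succ])

lemma prim_rec_ext_const: "prim_rec_ext n (\<lambda>_. k)"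
  by (induction k) (auto intro: prim_rec_ext_zero dest: prim_rec_ext_Suc)

lemma prim_rec_ext_rec_nat0:
  assumes "prim_rec_ext 2 (\<lambda>xs. h (hd xs) (hd (tl xs)))"
  shows "prim_rec_ext 1 (\<lambda>xs. rec_nat c h (hd xs))"
  using prim_rec_ext_rec[OF prim_rec_ext_const[of 0 c] assms[unfolded numeral_2_eq_2]] by simp

lemma prim_rec_ext_rec_nat1:
  assumes "prim_rec_ext 3 (\<lambda>xs. h (hd xs) (hd (tl xs)) (hd (tl (tl xs))))"
  shows "prim_rec_ext 2 (\<lambda>xs. rec_nat (hd (tl xs)) (\<lambda>k r. h k r (hd (tl xs))) (hd xs))"
  using prim_rec_ext_rec[of 1 "\<lambda>xs. hd xs" "\<lambda>xs. h (hd xs) (hd (tl xs)) (hd (tl (tl xs)))"]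
    prim_rec_ext_arg0[of 1] assms by (simp add: numeral_2_eq_2 numeral_3_eq_3)

lemma prim_rec_ext_comp_upt:
  assumes "prim_rec_ext m S" "\<forall>j<m. prim_rec_ext n (H j)"
  shows "prim_rec_ext n (\<lambda>xs. S (map (\<lambda>j. H j xs) [0..<m]))"
  using prim_rec_ext_comp[OF assms(1), of "map H [0..<m]" n] assms(2) by (auto simp: comp_def)

lemma prim_rec_ext_Cons:
  assumes "prim_rec_ext (Suc n) S" "prim_rec_ext n B"
  shows "prim_rec_ext n (\<lambda>xs. S (B xs # xs))"
proof -
  let ?H = "\<lambda>j xs. if j = 0 then B xs else xs ! (j - 1)"
  have "prim_rec_ext n (?H j)" if "j < Suc n" for j
    using that assms(2) by (cases j) (auto intro: prim_rec_ext_proj)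
  then have pr: "prim_rec_ext n (\<lambda>xs. S (map (\<lambda>j. ?H j xs) [0..<Suc n]))"
    by (intro prim_rec_ext_comp_upt[OF assms(1)]) auto
  have E: "map (\<lambda>j. ?H j xs) [0..<Suc n] = B xs # xs" if "length xs = n" for xs
    using that by (simp add: map_upt_Suc del: upt_Suc) (metis map_nth)
  show ?thesis by (rule prim_rec_ext_cong[OF pr]) (simp only: E)
qed

lemma prim_rec_ext_skip_arg1:
  assumes "prim_rec_ext (Suc n) S"
  shows "prim_rec_ext (Suc (Suc n)) (\<lambda>xs. S (hd xs # tl (tl xs)))"
proof -
  let ?H = "\<lambda>j xs. if j = 0 then xs ! 0 else xs ! (j + 1)"
  have "prim_rec_ext (Suc (Suc n)) (?H j)" if "j < Suc n" for j
    using that by (cases j) (auto intro: prim_rec_ext_proj)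
  then have pr: "prim_rec_ext (Suc (Suc n)) (\<lambda>xs. S (map (\<lambda>j. ?H j xs) [0..<Suc n]))"
    by (intro prim_rec_ext_comp_upt[OF assms]) auto
  have E: "map (\<lambda>j. ?H j xs) [0..<Suc n] = hd xs # tl (tl xs)" if len: "length xs = Suc (Suc n)" for xs
  proof -
    obtain a b ys where "xs = a # b # ys" "length ys = n"
      using len by (cases xs; cases "tl xs") auto
    then show ?thesis by (simp add: map_upt_Suc del: upt_Suc) (metis map_nth)
  qed
  show ?thesis by (rule prim_rec_ext_cong[OF pr]) (simp only: E)
qed

lemma prim_rec_ext_tl:
  assumes "prim_rec_ext n F"
  shows "prim_rec_ext (Suc n) (\<lambda>xs. F (tl xs))"
proof -
  have pr: "prim_rec_ext (Suc n) (\<lambda>xs. F (map (\<lambda>j. xs ! (j + 1)) [0..<n]))"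
    by (rule prim_rec_ext_comp_upt[OF assms]) (auto intro: prim_rec_ext_proj)
  have E: "map (\<lambda>j. xs ! (j + 1)) [0..<n] = tl xs" if "length xs = Suc n" for xs :: "nat list"
    using that by (intro nth_equalityI) (auto simp: nth_tl)
  show ?thesis by (rule prim_rec_ext_cong[OF pr]) (simp only: E)
qed

lemma prim_rec_ext_add:
  assumes "prim_rec_ext n F" "prim_rec_ext n G"
  shows "prim_rec_ext n (\<lambda>xs. F xs + G xs)"
proof -
  have "prim_rec_ext 2 (\<lambda>xs. rec_nat (hd (tl xs)) (\<lambda>k r. Suc r) (hd xs))"
    using prim_rec_ext_rec_nat1[of "\<lambda>k r y. Suc r"] prim_rec_ext_Suc[OF prim_rec_ext_arg1[of 3]]
    by simp
  moreover have "rec_nat y (\<lambda>k r. Suc r) x = x + y" for x y :: nat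
    by (induction x) auto
  ultimately have "prim_rec_ext 2 (\<lambda>xs. hd xs + hd (tl xs))" by simp
  from prim_rec_ext_compose2[OF this assms] show ?thesis .
qed

lemma prim_rec_ext_mult:
  assumes "prim_rec_ext n F" "prim_rec_ext n G"
  shows "prim_rec_ext n (\<lambda>xs. F xs * G xs)"
proof -
  have "prim_rec_ext 2 (\<lambda>xs. rec_nat 0 (\<lambda>k r. r + hd (tl xs)) (hd xs))"
    using prim_rec_ext_rec[of 1 "\<lambda>_. 0" "\<lambda>xs. hd (tl xs) + hd (tl (tl xs))"]
      prim_rec_ext_const[of 1 0] prim_rec_ext_add[OF prim_rec_ext_arg1[of 3] prim_rec_ext_arg2[of 3]]
    by (simp add: numeral_2_eq_2 numeral_3_eq_3 add.commute)
  moreover have "rec_nat 0 (\<lambda>k r. r + y) x = x * y" for x y :: nat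
    by (induction x) auto
  ultimately have "prim_rec_ext 2 (\<lambda>xs. hd xs * hd (tl xs))" by simp
  from prim_rec_ext_compose2[OF this assms] show ?thesis .
qed

lemma prim_rec_ext_diff:
  assumes "prim_rec_ext n F" "prim_rec_ext n G"
  shows "prim_rec_ext n (\<lambda>xs. F xs - G xs)"
proof -
  have "prim_rec_ext 1 (\<lambda>xs. rec_nat 0 (\<lambda>k r. k) (hd xs))"
    using prim_rec_ext_rec_nat0[of "\<lambda>k r. k" 0] prim_rec_ext_arg0[of 2] by simp
  moreover have "rec_nat 0 (\<lambda>k r. k) x = x - 1" for x :: nat
    by (cases x) auto
  ultimately have pred: "prim_rec_ext 1 (\<lambda>xs. hd xs - 1)" by simp
  have "prim_rec_ext 2 (\<lambda>xs. rec_nat (hd (tl xs)) (\<lambda>k r. r - 1) (hd xs))"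
    using prim_rec_ext_rec_nat1[of "\<lambda>k r y. r - 1"]
      prim_rec_ext_compose1[OF pred prim_rec_ext_arg1[of 3]] by simp
  moreover have "rec_nat y (\<lambda>k r. r - 1) x = y - x" for x y :: nat
    by (induction x) auto
  ultimately have "prim_rec_ext 2 (\<lambda>xs. hd (tl xs) - hd xs)" by simp
  from prim_rec_ext_compose2[OF this assms(2,1)] show ?thesis .
qed

lemma prim_rec_ext_positive:
  assumes "prim_rec_ext n F"
  shows "prim_rec_ext n (\<lambda>xs. of_bool (0 < F xs))"
proof -
  have "prim_rec_ext 1 (\<lambda>xs. rec_nat 0 (\<lambda>k r. 1) (hd xs))"
    using prim_rec_ext_rec_nat0[of "\<lambda>k r. 1" 0] prim_rec_ext_const[of 2 1] by simp
  moreover have "rec_nat (0::nat) (\<lambda>k r. 1) x = of_bool (0 < x)" for x :: nat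
    by (cases x) auto
  ultimately have "prim_rec_ext 1 (\<lambda>xs. of_bool (0 < hd xs))" by simp
  from prim_rec_ext_compose1[OF this assms] show ?thesis .
qed

lemma prim_rec_ext_less:
  "prim_rec_ext n F \<Longrightarrow> prim_rec_ext n G \<Longrightarrow> prim_rec_ext n (\<lambda>xs. of_bool (F xs < G xs))"
  using prim_rec_ext_positive[OF prim_rec_ext_diff, of n G F] by simp

lemma prim_rec_ext_not:
  "prim_rec_ext n (\<lambda>xs. of_bool (P xs)) \<Longrightarrow> prim_rec_ext n (\<lambda>xs. of_bool (\<not> P xs))"
  using prim_rec_ext_diff[OF prim_rec_ext_const[of n 1], of "\<lambda>xs. of_bool (P xs)"]
  by (rule prim_rec_ext_cong) auto

lemma prim_rec_ext_conj:
  "prim_rec_ext n (\<lambda>xs. of_bool (P xs)) \<Longrightarrow> prim_rec_ext n (\<lambda>xs. of_bool (Q xs))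
   \<Longrightarrow> prim_rec_ext n (\<lambda>xs. of_bool (P xs \<and> Q xs))"
  using prim_rec_ext_mult[of n "\<lambda>xs. of_bool (P xs)" "\<lambda>xs. of_bool (Q xs)"]
  by (rule prim_rec_ext_cong) auto

lemma prim_rec_ext_disj:
  "prim_rec_ext n (\<lambda>xs. of_bool (P xs)) \<Longrightarrow> prim_rec_ext n (\<lambda>xs. of_bool (Q xs))
   \<Longrightarrow> prim_rec_ext n (\<lambda>xs. of_bool (P xs \<or> Q xs))"
  using prim_rec_ext_not[OF prim_rec_ext_conj[OF prim_rec_ext_not prim_rec_ext_not], of n P Q]
  by simp

lemma prim_rec_ext_le:
  "prim_rec_ext n F \<Longrightarrow> prim_rec_ext n G \<Longrightarrow> prim_rec_ext n (\<lambda>xs. of_bool (F xs \<le> G xs))"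
  using prim_rec_ext_not[OF prim_rec_ext_less, of n G F] by (simp add: not_less)

lemma prim_rec_ext_eq:
  "prim_rec_ext n F \<Longrightarrow> prim_rec_ext n G \<Longrightarrow> prim_rec_ext n (\<lambda>xs. of_bool (F xs = G xs))"
  using prim_rec_ext_conj[OF prim_rec_ext_le prim_rec_ext_le, of n F G G F]
  by (rule prim_rec_ext_cong) auto

lemma prim_rec_ext_neq:
  "prim_rec_ext n F \<Longrightarrow> prim_rec_ext n G \<Longrightarrow> prim_rec_ext n (\<lambda>xs. of_bool (F xs \<noteq> G xs))"
  by (rule prim_rec_ext_not[OF prim_rec_ext_eq])

lemma prim_rec_ext_if:
  assumes "prim_rec_ext n (\<lambda>xs. of_bool (P xs))" "prim_rec_ext n A" "prim_rec_ext n B"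
  shows "prim_rec_ext n (\<lambda>xs. if P xs then A xs else B xs)"
proof -
  have "prim_rec_ext n (\<lambda>xs. of_bool (P xs) * A xs + of_bool (\<not> P xs) * B xs)"
    using assms by (intro prim_rec_ext_add prim_rec_ext_mult prim_rec_ext_not)
  then show ?thesis by (rule prim_rec_ext_cong) auto
qed

lemma prim_rec_ext_sum:
  assumes "prim_rec_ext (Suc n) (\<lambda>ys. F (hd ys) (tl ys))" "prim_rec_ext n B"
  shows "prim_rec_ext n (\<lambda>xs. \<Sum>i<B xs. F i xs)"
proof -
  have "prim_rec_ext (Suc (Suc n)) (\<lambda>zs. hd (tl zs) + F (hd zs) (tl (tl zs)))"
    using prim_rec_ext_add[OF prim_rec_ext_arg1 prim_rec_ext_skip_arg1[OF assms(1)]] by simp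
  from prim_rec_ext_rec[OF prim_rec_ext_const[of n 0] this]
  have "prim_rec_ext (Suc n) (\<lambda>ys. rec_nat 0 (\<lambda>k r. r + F k (tl ys)) (hd ys))"
    by (simp add: add.commute)
  moreover have "rec_nat 0 (\<lambda>k r. r + F k ys) x = (\<Sum>i<x. F i ys)" for x ys
    by (induction x) auto
  ultimately have "prim_rec_ext (Suc n) (\<lambda>ys. \<Sum>i<hd ys. F i (tl ys))" by simp
  from prim_rec_ext_Cons[OF this assms(2)] show ?thesis by simp
qed

lemma prim_rec_ext_bex:
  assumes "prim_rec_ext (Suc n) (\<lambda>ys. of_bool (P (hd ys) (tl ys)))" "prim_rec_ext n B"
  shows "prim_rec_ext n (\<lambda>xs. of_bool (\<exists>i<B xs. P i xs))"
proof -
  have "(0 < (\<Sum>i<b. of_bool (P i xs) :: nat)) \<longleftrightarrow> (\<exists>i<b. P i xs)" for b xs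
    by (induction b) (auto simp: less_Suc_eq)
  with prim_rec_ext_positive[OF prim_rec_ext_sum[OF assms]] show ?thesis by simp
qed

lemma prim_rec_ext_ball:
  assumes "prim_rec_ext (Suc n) (\<lambda>ys. of_bool (P (hd ys) (tl ys)))" "prim_rec_ext n B"
  shows "prim_rec_ext n (\<lambda>xs. of_bool (\<forall>i<B xs. P i xs))"
  using prim_rec_ext_not[OF prim_rec_ext_bex[OF prim_rec_ext_not[OF assms(1)] assms(2)]] by simp

text \<open>The least \<open>i < B\<close> with \<open>P i\<close>, or \<open>B\<close> if there is none; written as a sum so that it is
  visibly primitive recursive.\<close>
definition bounded_least :: "nat \<Rightarrow> (nat \<Rightarrow> bool) \<Rightarrow> nat" where
  "bounded_least B P = (\<Sum>j<B. of_bool (\<forall>i\<le>j. \<not> P i))"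

lemma bounded_least_eq:
  assumes "i < B" "P i" "\<And>j. P j \<Longrightarrow> i \<le> j"
  shows "bounded_least B P = i"
proof -
  have "{j. j < B \<and> (\<forall>i'\<le>j. \<not> P i')} = {..<i}"
    using assms by (auto simp: not_le) (meson le_trans not_le)
  then show ?thesis
    unfolding bounded_least_def by (simp add: sum.If_cases Int_def)
qed

lemma prim_rec_ext_bounded_least:
  assumes "prim_rec_ext (Suc n) (\<lambda>ys. of_bool (P (hd ys) (tl ys)))" "prim_rec_ext n B"
  shows "prim_rec_ext n (\<lambda>xs. bounded_least (B xs) (\<lambda>i. P i xs))"
proof -
  have "prim_rec_ext (Suc (Suc n)) (\<lambda>zs. of_bool (P (hd zs) (tl (tl zs))))"
    using prim_rec_ext_skip_arg1[OF assms(1)] by simp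
  then have "prim_rec_ext (Suc n) (\<lambda>ys. of_bool (\<forall>i<Suc (hd ys). \<not> P i (tl ys)))"
    using prim_rec_ext_ball[OF prim_rec_ext_not, of "Suc n" "\<lambda>i ys. P i (tl ys)"]
      prim_rec_ext_Suc[OF prim_rec_ext_arg0]
    by simp
  then show ?thesis
    unfolding bounded_least_def less_Suc_eq_le[symmetric] using assms(2) by (rule prim_rec_ext_sum)
qed

lemma prim_rec_ext_prod_encode:
  assumes "prim_rec_ext n F" "prim_rec_ext n G"
  shows "prim_rec_ext n (\<lambda>xs. prod_encode (F xs, G xs))"
proof -
  have "prim_rec_ext 1 (\<lambda>xs. rec_nat 0 (\<lambda>k r. r + Suc k) (hd xs))"
    using prim_rec_ext_rec_nat0[of "\<lambda>k r. r + Suc k" 0]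
      prim_rec_ext_add[OF prim_rec_ext_arg1 prim_rec_ext_Suc[OF prim_rec_ext_arg0], of 2]
    by simp
  moreover have "rec_nat 0 (\<lambda>k r. r + Suc k) x = triangle x" for x
    by (induction x) auto
  ultimately have "prim_rec_ext 1 (\<lambda>xs. triangle (hd xs))" by simp
  from prim_rec_ext_compose1[OF this prim_rec_ext_add[OF assms]]
  have "prim_rec_ext n (\<lambda>xs. triangle (F xs + G xs))" .
  from prim_rec_ext_add[OF this assms(1)] show ?thesis
    by (simp add: prod_encode_def)
qed

lemma fst_prod_decode_eq_bounded_least:
  "fst (prod_decode x) = bounded_least (Suc x) (\<lambda>a. \<exists>b<Suc x. prod_encode (a, b) = x)"
  and snd_prod_decode_eq_bounded_least:
  "snd (prod_decode x) = bounded_least (Suc x) (\<lambda>b. \<exists>a<Suc x. prod_encode (a, b) = x)"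
proof -
  obtain a b where ab: "prod_decode x = (a, b)" by (cases "prod_decode x")
  then have x: "prod_encode (a, b) = x" by (metis prod_decode_inverse)
  have bounds: "a < Suc x" "b < Suc x"
    using le_prod_encode_1[of a b] le_prod_encode_2[of b a] unfolding x by auto
  have unique: "a' = a \<and> b' = b" if "prod_encode (a', b') = x" for a' b'
    using prod_encode_eq[of "(a', b')" "(a, b)"] unfolding that x by simp
  have "bounded_least (Suc x) (\<lambda>a. \<exists>b<Suc x. prod_encode (a, b) = x) = a"
  proof (rule bounded_least_eq)
    show "\<exists>b'<Suc x. prod_encode (a, b') = x" using bounds x by blast
    show "a \<le> a'" if "\<exists>b<Suc x. prod_encode (a', b) = x" for a' using that unique by force
  qed (rule bounds)
  then show "fst (prod_decode x) = bounded_least (Suc x) (\<lambda>a. \<exists>b<Suc x. prod_encode (a, b) = x)"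
    using ab by simp
  have "bounded_least (Suc x) (\<lambda>b. \<exists>a<Suc x. prod_encode (a, b) = x) = b"
  proof (rule bounded_least_eq)
    show "\<exists>a'<Suc x. prod_encode (a', b) = x" using bounds x by blast
    show "b \<le> b'" if "\<exists>a<Suc x. prod_encode (a, b') = x" for b' using that unique by force
  qed (rule bounds)
  then show "snd (prod_decode x) = bounded_least (Suc x) (\<lambda>b. \<exists>a<Suc x. prod_encode (a, b) = x)"
    using ab by simp
qed

lemma prim_rec_ext_fst_prod_decode:
  assumes "prim_rec_ext n F"
  shows "prim_rec_ext n (\<lambda>xs. fst (prod_decode (F xs)))"
proof -
  have "prim_rec_ext 1 (\<lambda>xs. fst (prod_decode (hd xs)))"
    unfolding fst_prod_decode_eq_bounded_least
    by (intro prim_rec_ext_bounded_least prim_rec_ext_bex prim_rec_ext_eq prim_rec_ext_prod_encode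
        prim_rec_ext_Suc prim_rec_ext_arg0 prim_rec_ext_arg1 prim_rec_ext_arg2) auto
  from prim_rec_ext_compose1[OF this assms] show ?thesis .
qed

lemma prim_rec_ext_snd_prod_decode:
  assumes "prim_rec_ext n F"
  shows "prim_rec_ext n (\<lambda>xs. snd (prod_decode (F xs)))"
proof -
  have "prim_rec_ext 1 (\<lambda>xs. snd (prod_decode (hd xs)))"
    unfolding snd_prod_decode_eq_bounded_least
    by (intro prim_rec_ext_bounded_least prim_rec_ext_bex prim_rec_ext_eq prim_rec_ext_prod_encode
        prim_rec_ext_Suc prim_rec_ext_arg0 prim_rec_ext_arg1 prim_rec_ext_arg2) auto
  from prim_rec_ext_compose1[OF this assms] show ?thesis .
qed

lemma div_eq_bounded_least:
  assumes "0 < y"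
  shows "x div y = bounded_least (Suc x) (\<lambda>q. x < (q + 1) * y)"
proof (rule bounded_least_eq[symmetric])
  show "x div y < Suc x" by (simp add: le_imp_less_Suc div_le_dividend)
  show "x < (x div y + 1) * y"
    using dividend_less_times_div[OF assms, of x] by (simp add: algebra_simps)
  show "x div y \<le> q" if "x < (q + 1) * y" for q
    using that assms by (simp add: less_Suc_eq_le[symmetric] div_less_iff_less_mult)
qed

lemma prim_rec_ext_div:
  assumes "prim_rec_ext n F" "prim_rec_ext n G"
  shows "prim_rec_ext n (\<lambda>xs. F xs div G xs)"
proof -
  have "prim_rec_ext n
      (\<lambda>xs. if G xs = 0 then 0 else bounded_least (Suc (F xs)) (\<lambda>q. F xs < (q + 1) * G xs))"
    using assms
    by (intro prim_rec_ext_if prim_rec_ext_eq prim_rec_ext_bounded_least prim_rec_ext_less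
        prim_rec_ext_mult prim_rec_ext_add prim_rec_ext_const prim_rec_ext_Suc prim_rec_ext_arg0
        prim_rec_ext_tl) auto
  then show ?thesis by (rule prim_rec_ext_cong) (auto simp: div_eq_bounded_least)
qed

lemma prim_rec_ext_mod:
  assumes "prim_rec_ext n F" "prim_rec_ext n G"
  shows "prim_rec_ext n (\<lambda>xs. F xs mod G xs)"
proof -
  have "prim_rec_ext n (\<lambda>xs. F xs - G xs * (F xs div G xs))"
    using assms by (intro prim_rec_ext_diff prim_rec_ext_mult prim_rec_ext_div)
  then show ?thesis by (rule prim_rec_ext_cong) (simp add: minus_mult_div_eq_mod)
qed

lemma prim_rec_ext_power2:
  assumes "prim_rec_ext n F"
  shows "prim_rec_ext n (\<lambda>xs. 2 ^ F xs)"
proof -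
  have "prim_rec_ext 1 (\<lambda>xs. rec_nat 1 (\<lambda>k r. r + r) (hd xs))"
    using prim_rec_ext_rec_nat0[of "\<lambda>k r. r + r" 1]
      prim_rec_ext_add[OF prim_rec_ext_arg1 prim_rec_ext_arg1, of 2] by simp
  moreover have "rec_nat 1 (\<lambda>k r. r + r) x = (2::nat) ^ x" for x
    by (induction x) auto
  ultimately have "prim_rec_ext 1 (\<lambda>xs. 2 ^ hd xs)" by simp
  from prim_rec_ext_compose1[OF this assms] show ?thesis .
qed

lemma prim_rec_ext_mem_set_decode:
  assumes "prim_rec_ext n F" "prim_rec_ext n G"
  shows "prim_rec_ext n (\<lambda>xs. of_bool (F xs \<in> set_decode (G xs)))"
proof -
  have "prim_rec_ext n (\<lambda>xs. of_bool ((G xs div 2 ^ F xs) mod 2 = 1))"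
    using assms by (intro prim_rec_ext_eq prim_rec_ext_mod prim_rec_ext_div prim_rec_ext_power2
        prim_rec_ext_const)
  then show ?thesis by (rule prim_rec_ext_cong) (simp add: set_decode_def odd_iff_mod_2_eq_one)
qed

definition code_hd :: "nat \<Rightarrow> nat" where
  "code_hd c = fst (prod_decode (c - 1))"

definition code_tl :: "nat \<Rightarrow> nat" where
  "code_tl c = snd (prod_decode (c - 1))"

definition code_drop :: "nat \<Rightarrow> nat \<Rightarrow> nat" where
  "code_drop k c = (code_tl ^^ k) c"

definition code_nth :: "nat \<Rightarrow> nat \<Rightarrow> nat" where
  "code_nth i c = code_hd (code_drop i c)"

definition code_length :: "nat \<Rightarrow> nat" where
  "code_length c = bounded_least (Suc c) (\<lambda>k. code_drop k c = 0)"

lemma code_hd_list_encode: "xs \<noteq> [] \<Longrightarrow> code_hd (list_encode xs) = hd xs"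
  by (cases xs) (auto simp: code_hd_def)

lemma code_tl_list_encode: "code_tl (list_encode xs) = list_encode (tl xs)"
proof (cases xs)
  case Nil
  have "prod_encode (0, 0) = 0" by (simp add: prod_encode_def)
  then have "prod_decode 0 = (0, 0)" by (metis prod_encode_inverse)
  with Nil show ?thesis by (simp add: code_tl_def)
qed (simp add: code_tl_def)

lemma code_drop_list_encode: "code_drop k (list_encode xs) = list_encode (drop k xs)"
  unfolding code_drop_def
  by (induction k arbitrary: xs)
    (simp_all add: funpow_Suc_right code_tl_list_encode drop_Suc del: funpow.simps)

lemma code_nth_list_encode: "i < length xs \<Longrightarrow> code_nth i (list_encode xs) = xs ! i"
  by (simp add: code_nth_def code_drop_list_encode code_hd_list_encode hd_drop_conv_nth)

lemma length_le_list_encode: "length xs \<le> list_encode xs"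
  by (induction xs) (auto intro: le_trans[OF _ le_prod_encode_2])

lemma code_length_list_encode: "code_length (list_encode xs) = length xs"
  unfolding code_length_def
proof (rule bounded_least_eq)
  have "code_drop k (list_encode xs) = 0 \<longleftrightarrow> length xs \<le> k" for k
    by (metis code_drop_list_encode list_encode.simps(1) list_encode_eq drop_eq_Nil)
  then show "code_drop (length xs) (list_encode xs) = 0"
    and "\<And>k. code_drop k (list_encode xs) = 0 \<Longrightarrow> length xs \<le> k" by auto
  show "length xs < Suc (list_encode xs)"
    using length_le_list_encode[of xs] by simp
qed

lemma prim_rec_ext_code_hd:
  "prim_rec_ext n F \<Longrightarrow> prim_rec_ext n (\<lambda>xs. code_hd (F xs))"
  unfolding code_hd_def by (intro prim_rec_ext_fst_prod_decode prim_rec_ext_diff prim_rec_ext_const)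

lemma prim_rec_ext_code_tl:
  "prim_rec_ext n F \<Longrightarrow> prim_rec_ext n (\<lambda>xs. code_tl (F xs))"
  unfolding code_tl_def by (intro prim_rec_ext_snd_prod_decode prim_rec_ext_diff prim_rec_ext_const)

lemma prim_rec_ext_code_drop:
  assumes "prim_rec_ext n F" "prim_rec_ext n G"
  shows "prim_rec_ext n (\<lambda>xs. code_drop (F xs) (G xs))"
proof -
  have "prim_rec_ext 2 (\<lambda>xs. rec_nat (hd (tl xs)) (\<lambda>k r. code_tl r) (hd xs))"
    using prim_rec_ext_rec_nat1[of "\<lambda>k r y. code_tl r"]
      prim_rec_ext_code_tl[OF prim_rec_ext_arg1[of 3]] by simp
  moreover have "rec_nat c (\<lambda>k r. code_tl r) k = code_drop k c" for k c
    unfolding code_drop_def by (induction k) auto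
  ultimately have "prim_rec_ext 2 (\<lambda>xs. code_drop (hd xs) (hd (tl xs)))" by simp
  from prim_rec_ext_compose2[OF this assms] show ?thesis .
qed

lemma prim_rec_ext_code_nth:
  "prim_rec_ext n F \<Longrightarrow> prim_rec_ext n G \<Longrightarrow> prim_rec_ext n (\<lambda>xs. code_nth (F xs) (G xs))"
  unfolding code_nth_def by (intro prim_rec_ext_code_hd prim_rec_ext_code_drop)

lemma prim_rec_ext_code_length:
  assumes "prim_rec_ext n F"
  shows "prim_rec_ext n (\<lambda>xs. code_length (F xs))"
proof -
  have "prim_rec_ext 1 (\<lambda>xs. code_length (hd xs))"
    unfolding code_length_def
    by (intro prim_rec_ext_bounded_least prim_rec_ext_eq prim_rec_ext_code_drop prim_rec_ext_Suc
        prim_rec_ext_arg0 prim_rec_ext_arg1 prim_rec_ext_const) auto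
  from prim_rec_ext_compose1[OF this assms] show ?thesis .
qed

definition atom_decode :: "nat \<Rightarrow> atom" where
  "atom_decode m = (if even m then Lt (fst (prod_decode (m div 2))) (snd (prod_decode (m div 2)))
                    else Eq (fst (prod_decode (m div 2))) (snd (prod_decode (m div 2))))"

definition basic_decode :: "nat \<Rightarrow> basic" where
  "basic_decode n = (if even n then Pos (atom_decode (n div 2)) else Neg (atom_decode (n div 2)))"

lemma basic_code_decode: "basic_code (basic_decode n) = n"
proof -
  have "atom_code (atom_decode m) = m" for m
    unfolding atom_decode_def by auto
  then show ?thesis by (auto simp: basic_decode_def)
qed

lemma basic_decode_code: "basic_decode (basic_code b) = b"
proof -
  have "atom_decode (atom_code a) = a" for a
    by (cases a) (auto simp: atom_decode_def)
  then show ?thesis by (cases b) (auto simp: basic_decode_def)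
qed

lemma basic_code_eq_iff: "basic_code a = basic_code b \<longleftrightarrow> a = b"
  by (metis basic_decode_code)

lemma prim_rec_ext_basic_code:
  assumes "prim_rec_ext n F" "prim_rec_ext n G"
  shows "prim_rec_ext n (\<lambda>xs. basic_code (Pos (Eq (F xs) (G xs))))"
    and "prim_rec_ext n (\<lambda>xs. basic_code (Pos (Lt (F xs) (G xs))))"
    and "prim_rec_ext n (\<lambda>xs. basic_code (Neg (Lt (F xs) (G xs))))"
proof -
  note double = prim_rec_ext_mult[OF prim_rec_ext_const[of n 2]]
  note code = prim_rec_ext_prod_encode[OF assms]
  show "prim_rec_ext n (\<lambda>xs. basic_code (Pos (Eq (F xs) (G xs))))"
    using double[OF prim_rec_ext_add[OF double[OF code] prim_rec_ext_const[of n 1]]] by simp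
  show "prim_rec_ext n (\<lambda>xs. basic_code (Pos (Lt (F xs) (G xs))))"
    using double[OF double[OF code]] by simp
  show "prim_rec_ext n (\<lambda>xs. basic_code (Neg (Lt (F xs) (G xs))))"
    using prim_rec_ext_add[OF double[OF double[OF code]] prim_rec_ext_const[of n 1]] by simp
qed

section \<open>Words and their lexicographic order\<close>

text \<open>\<open>words g\<close> models \<open>\<Sum>\<^sub>a L\<^bsup>g a\<^esup>\<close>: a summand index \<open>a\<close> followed by a point of \<open>L\<^bsup>g a\<^esup>\<close>.\<close>
definition words :: "('a \<Rightarrow> nat) \<Rightarrow> 'a list set" where
  "words g = {xs. xs \<noteq> [] \<and> length xs = Suc (g (hd xs))}"

definition first_diff :: "'a list \<Rightarrow> 'a list \<Rightarrow> nat" where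
  "first_diff xs ys = (LEAST i. i < length xs \<and> i < length ys \<and> xs ! i \<noteq> ys ! i)"

definition word_less :: "('a \<Rightarrow> 'a \<Rightarrow> bool) \<Rightarrow> 'a list \<Rightarrow> 'a list \<Rightarrow> bool" where
  "word_less lt xs ys \<longleftrightarrow> xs \<noteq> ys \<and> lt (xs ! first_diff xs ys) (ys ! first_diff xs ys)"

lemma first_diff_words:
  assumes "xs \<in> words g" "ys \<in> words g" "xs \<noteq> ys"
  shows "first_diff xs ys < length xs" "first_diff xs ys < length ys"
    "xs ! first_diff xs ys \<noteq> ys ! first_diff xs ys"
    "j < first_diff xs ys \<Longrightarrow> xs ! j = ys ! j"
proof -
  let ?P = "\<lambda>i. i < length xs \<and> i < length ys \<and> xs ! i \<noteq> ys ! i"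
  have "\<exists>i. ?P i"
  proof (cases "hd xs = hd ys")
    case True
    then have "length xs = length ys" using assms(1,2) by (simp add: words_def)
    then show ?thesis using assms(3) by (metis nth_equalityI)
  next
    case False
    then show ?thesis using assms(1,2) by (intro exI[of _ 0]) (auto simp: words_def hd_conv_nth)
  qed
  then have "?P (first_diff xs ys)" unfolding first_diff_def by (rule LeastI_ex)
  then show "first_diff xs ys < length xs" "first_diff xs ys < length ys"
    "xs ! first_diff xs ys \<noteq> ys ! first_diff xs ys" by auto
  assume "j < first_diff xs ys"
  then have "\<not> ?P j" unfolding first_diff_def by (rule not_less_Least)
  then show "xs ! j = ys ! j" using \<open>?P (first_diff xs ys)\<close> \<open>j < first_diff xs ys\<close> by auto
qed

lemma first_diff_eqI:
  assumes "i < length xs" "i < length ys" "xs ! i \<noteq> ys ! i" "\<And>j. j < i \<Longrightarrow> xs ! j = ys ! j"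
  shows "first_diff xs ys = i"
  unfolding first_diff_def using assms by (intro Least_equality) (auto simp: not_less[symmetric])

lemma first_diff_commute: "first_diff xs ys = first_diff ys xs"
  unfolding first_diff_def by metis

lemma first_diff_map:
  assumes "inj_on f A" "set xs \<subseteq> A" "set ys \<subseteq> A"
  shows "first_diff (map f xs) (map f ys) = first_diff xs ys"
proof -
  have "map f xs ! i \<noteq> map f ys ! i \<longleftrightarrow> xs ! i \<noteq> ys ! i" if "i < length xs" "i < length ys" for i
  proof -
    have "xs ! i \<in> A" "ys ! i \<in> A" using that assms(2,3) nth_mem by blast+
    then show ?thesis using that assms(1) by (auto dest: inj_onD)
  qed
  then show ?thesis unfolding first_diff_def by (metis length_map)
qed

lemma word_less_converse: "word_less (\<lambda>a b. lt b a) xs ys \<longleftrightarrow> word_less lt ys xs"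
  unfolding word_less_def by (auto simp: first_diff_commute)

lemma word_less_map:
  assumes "xs \<in> words g" "ys \<in> words g" "inj_on f A" "set xs \<subseteq> A" "set ys \<subseteq> A"
    and "\<And>a b. a \<in> A \<Longrightarrow> b \<in> A \<Longrightarrow> lt' (f a) (f b) \<longleftrightarrow> lt a b"
  shows "word_less lt' (map f xs) (map f ys) \<longleftrightarrow> word_less lt xs ys"
proof (cases "xs = ys")
  case False
  have "map f xs \<noteq> map f ys"
    using False assms(3-5) inj_on_map_eq_map[of f xs ys]
    by (metis inj_on_subset le_sup_iff order_refl)
  moreover have "xs ! first_diff xs ys \<in> A" "ys ! first_diff xs ys \<in> A"
    using first_diff_words[OF assms(1,2) False] assms(4,5) nth_mem by blast+
  ultimately show ?thesis
    using False first_diff_words[OF assms(1,2) False] assms(6)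
    by (simp add: word_less_def first_diff_map[OF assms(3-5)])
qed (simp add: word_less_def)

definition word_order :: "struc \<Rightarrow> struc" where
  "word_order S =
     (list_encode ` {xs \<in> words id. set xs \<subseteq> fst S},
      {(list_encode xs, list_encode ys) | xs ys. xs \<in> words id \<and> ys \<in> words id
         \<and> set xs \<subseteq> fst S \<and> set ys \<subseteq> fst S \<and> word_less (\<lambda>a b. (a, b) \<in> snd S) xs ys})"

lemma word_order_iff:
  "list_encode xs \<in> fst (word_order S) \<longleftrightarrow> xs \<in> words id \<and> set xs \<subseteq> fst S"
  "(list_encode xs, list_encode ys) \<in> snd (word_order S) \<longleftrightarrow>
     xs \<in> words id \<and> ys \<in> words id \<and> set xs \<subseteq> fst S \<and> set ys \<subseteq> fst S
     \<and> word_less (\<lambda>a b. (a, b) \<in> snd S) xs ys"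
  by (auto simp: word_order_def list_encode_eq)

lemma is_struc_word_order: "is_struc (word_order S)"
  by (auto simp: is_struc_def word_order_def)

definition domain_facts :: "nat list \<Rightarrow> basic set" where
  "domain_facts xs = (\<lambda>z. Pos (Eq z z)) ` set xs"

definition word_fact :: "basic set \<Rightarrow> nat list \<Rightarrow> nat list \<Rightarrow> basic \<Rightarrow> bool" where
  "word_fact \<alpha> xs ys \<phi> \<longleftrightarrow>
     \<phi> = Pos (Eq (list_encode xs) (list_encode ys)) \<and> xs = ys
   \<or> \<phi> = Neg (Eq (list_encode xs) (list_encode ys)) \<and> xs \<noteq> ys
   \<or> \<phi> = Pos (Lt (list_encode xs) (list_encode ys)) \<and> word_less (\<lambda>a b. Pos (Lt a b) \<in> \<alpha>) xs ys
   \<or> \<phi> = Neg (Lt (list_encode xs) (list_encode ys))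
       \<and> (xs = ys \<or> word_less (\<lambda>a b. Neg (Lt a b) \<in> \<alpha>) xs ys)"

definition Gamma_derives :: "basic set \<Rightarrow> basic \<Rightarrow> bool" where
  "Gamma_derives \<alpha> \<phi> \<longleftrightarrow> (\<exists>xs ys. xs \<in> words id \<and> ys \<in> words id
     \<and> domain_facts xs \<union> domain_facts ys \<subseteq> \<alpha> \<and> word_fact \<alpha> xs ys \<phi>)"

definition sentences_on :: "nat \<Rightarrow> nat \<Rightarrow> basic set" where
  "sentences_on c d = {Pos (Eq c d), Neg (Eq c d), Pos (Lt c d), Neg (Lt c d)}"

lemma sentences_on_cover: "\<exists>c d. \<phi> \<in> sentences_on c d"
proof (cases \<phi>)
  case (Pos a) then show ?thesis by (cases a) (auto simp: sentences_on_def)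
next
  case (Neg a) then show ?thesis by (cases a) (auto simp: sentences_on_def)
qed

lemma Gamma_derives_iff:
  assumes "\<phi> \<in> sentences_on (list_encode xs) (list_encode ys)"
  shows "Gamma_derives \<alpha> \<phi> \<longleftrightarrow> xs \<in> words id \<and> ys \<in> words id
     \<and> domain_facts xs \<union> domain_facts ys \<subseteq> \<alpha> \<and> word_fact \<alpha> xs ys \<phi>"
proof -
  have "xs' = xs \<and> ys' = ys" if "word_fact \<alpha> xs' ys' \<phi>" for xs' ys'
    using that assms by (auto simp: word_fact_def sentences_on_def list_encode_eq)
  then show ?thesis unfolding Gamma_derives_def by blast
qed

text \<open>\<open>Gamma\<close> pairs \<open>\<phi>\<close> with every finite sufficient \<open>\<alpha>\<close>, not only the minimal ones, so that
  membership of a pair is decided by membership tests on \<open>\<alpha>\<close>.\<close>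
definition Gamma :: "(basic set \<times> basic) set" where
  "Gamma = {(\<alpha>, \<phi>). finite \<alpha> \<and> Gamma_derives \<alpha> \<phi>}"

lemma word_fact_mono: "word_fact \<alpha> xs ys \<phi> \<Longrightarrow> \<alpha> \<subseteq> \<beta> \<Longrightarrow> word_fact \<beta> xs ys \<phi>"
  unfolding word_fact_def word_less_def by auto

lemma Gamma_derives_mono: "Gamma_derives \<alpha> \<phi> \<Longrightarrow> \<alpha> \<subseteq> \<beta> \<Longrightarrow> Gamma_derives \<beta> \<phi>"
  unfolding Gamma_derives_def by (meson order_trans word_fact_mono)

lemma Gamma_derives_finite:
  assumes "Gamma_derives X \<phi>"
  shows "\<exists>\<alpha>\<subseteq>X. finite \<alpha> \<and> Gamma_derives \<alpha> \<phi>"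
proof -
  obtain xs ys where xs: "xs \<in> words id" "ys \<in> words id"
    "domain_facts xs \<union> domain_facts ys \<subseteq> X" "word_fact X xs ys \<phi>"
    using assms unfolding Gamma_derives_def by blast
  let ?a = "xs ! first_diff xs ys" and ?b = "ys ! first_diff xs ys"
  define \<alpha> where "\<alpha> = X \<inter> (domain_facts xs \<union> domain_facts ys \<union> {Pos (Lt ?a ?b), Neg (Lt ?a ?b)})"
  have "finite \<alpha>" unfolding \<alpha>_def domain_facts_def by simp
  moreover have "word_fact \<alpha> xs ys \<phi>"
    using xs(4) unfolding word_fact_def word_less_def \<alpha>_def by blast
  then have "Gamma_derives \<alpha> \<phi>" unfolding Gamma_derives_def using xs(1-3) \<alpha>_def by blast
  ultimately show ?thesis unfolding \<alpha>_def by blast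
qed

lemma enum_apply_Gamma: "enum_apply Gamma X = {\<phi>. Gamma_derives X \<phi>}"
proof (intro set_eqI iffI)
  fix \<phi> assume "\<phi> \<in> enum_apply Gamma X"
  then obtain \<alpha> where "Gamma_derives \<alpha> \<phi>" "\<alpha> \<subseteq> X"
    unfolding enum_apply_def Gamma_def by auto
  then show "\<phi> \<in> {\<phi>. Gamma_derives X \<phi>}" using Gamma_derives_mono by blast
next
  fix \<phi> assume "\<phi> \<in> {\<phi>. Gamma_derives X \<phi>}"
  then obtain \<alpha> where "\<alpha> \<subseteq> X" "finite \<alpha>" "Gamma_derives \<alpha> \<phi>"
    using Gamma_derives_finite by blast
  then show "\<phi> \<in> enum_apply Gamma X" unfolding enum_apply_def Gamma_def by auto
qed

lemma diag_iff [simp]: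
  "Pos (Eq a b) \<in> diag S \<longleftrightarrow> a = b \<and> a \<in> fst S"
  "Neg (Eq a b) \<in> diag S \<longleftrightarrow> a \<in> fst S \<and> b \<in> fst S \<and> a \<noteq> b"
  "Pos (Lt a b) \<in> diag S \<longleftrightarrow> (a, b) \<in> snd S"
  "Neg (Lt a b) \<in> diag S \<longleftrightarrow> a \<in> fst S \<and> b \<in> fst S \<and> (a, b) \<notin> snd S"
  by (auto simp: diag_def)

lemma diag_inj: "diag S = diag T \<Longrightarrow> S = T"
proof -
  assume eq: "diag S = diag T"
  then have "fst S = fst T"
    using diag_iff(1) by blast
  moreover have "p \<in> snd S \<longleftrightarrow> p \<in> snd T" for p
    using eq diag_iff(3)[of "fst p" "snd p"] by (metis prod.collapse)
  then have "snd S = snd T" by blast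
  ultimately show ?thesis by (simp add: prod_eq_iff)
qed

lemma domain_facts_subset_diag: "domain_facts xs \<subseteq> diag S \<longleftrightarrow> set xs \<subseteq> fst S"
  by (auto simp: domain_facts_def)

lemma Gamma_derives_diag: "Gamma_derives (diag S) \<phi> \<longleftrightarrow> \<phi> \<in> diag (word_order S)"
proof -
  obtain xs ys where \<phi>: "\<phi> \<in> sentences_on (list_encode xs) (list_encode ys)"
    by (metis sentences_on_cover list_decode_inverse)
  have letters: "xs ! first_diff xs ys \<in> fst S" "ys ! first_diff xs ys \<in> fst S"
    if "xs \<in> words id" "ys \<in> words id" "xs \<noteq> ys" "set xs \<subseteq> fst S" "set ys \<subseteq> fst S"
    using first_diff_words(1,2)[OF that(1-3)] that(4,5) nth_mem by blast+
  from \<phi> show ?thesis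
    unfolding Gamma_derives_iff[OF \<phi>] sentences_on_def
    by (elim insertE emptyE)
      (auto simp: word_fact_def word_order_iff domain_facts_subset_diag list_encode_eq
        word_less_def dest: letters)
qed

lemma enum_apply_Gamma_diag: "enum_apply Gamma (diag S) = diag (word_order S)"
  unfolding enum_apply_Gamma Gamma_derives_diag by simp

definition code_is_word :: "nat \<Rightarrow> bool" where
  "code_is_word c \<longleftrightarrow> 0 < c \<and> code_length c = Suc (code_hd c)"

definition code_domain_facts :: "nat \<Rightarrow> nat \<Rightarrow> bool" where
  "code_domain_facts s c \<longleftrightarrow>
     (\<forall>i<code_length c. basic_code (Pos (Eq (code_nth i c) (code_nth i c))) \<in> set_decode s)"

definition code_first_diff :: "nat \<Rightarrow> nat \<Rightarrow> nat" where
  "code_first_diff c d = bounded_least (code_length c) (\<lambda>i. code_nth i c \<noteq> code_nth i d)"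

text \<open>For \<open>x = pair_code (\<alpha>, \<phi>)\<close>: \<open>b = basic_code \<phi>\<close> has the sign of \<open>\<phi>\<close> as its parity,
  \<open>a = b div 2\<close> is the code of the atom, with the kind of the atom as its parity, and
  \<open>a div 2 = prod_encode (c, d)\<close> for the constants \<open>c, d\<close> of the atom.\<close>
definition Gamma_code :: "nat \<Rightarrow> bool" where
  "Gamma_code x \<longleftrightarrow> (let s = fst (prod_decode x); b = snd (prod_decode x); a = b div 2;
      c = fst (prod_decode (a div 2)); d = snd (prod_decode (a div 2));
      e = code_nth (code_first_diff c d) c; e' = code_nth (code_first_diff c d) d in
     code_is_word c \<and> code_is_word d \<and> code_domain_facts s c \<and> code_domain_facts s d \<and>
     (b mod 2 = 0 \<and> a mod 2 = 1 \<and> c = d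
      \<or> b mod 2 = 1 \<and> a mod 2 = 1 \<and> c \<noteq> d
      \<or> b mod 2 = 0 \<and> a mod 2 = 0 \<and> c \<noteq> d \<and> basic_code (Pos (Lt e e')) \<in> set_decode s
      \<or> b mod 2 = 1 \<and> a mod 2 = 0 \<and> (c = d \<or> basic_code (Neg (Lt e e')) \<in> set_decode s)))"

lemma code_is_word_list_encode: "code_is_word (list_encode xs) \<longleftrightarrow> xs \<in> words id"
proof (cases "xs = []")
  case False
  then have "0 < list_encode xs" by (cases xs) auto
  then show ?thesis
    unfolding code_is_word_def words_def code_length_list_encode code_hd_list_encode[OF False]
    using False by simp
qed (simp add: code_is_word_def words_def)

lemma code_domain_facts_list_encode:
  assumes "set_decode s = basic_code ` \<alpha>"
  shows "code_domain_facts s (list_encode xs) \<longleftrightarrow> domain_facts xs \<subseteq> \<alpha>"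
proof -
  have mem: "basic_code \<psi> \<in> set_decode s \<longleftrightarrow> \<psi> \<in> \<alpha>" for \<psi>
    using assms by (auto simp: basic_code_eq_iff)
  have "code_domain_facts s (list_encode xs) \<longleftrightarrow> (\<forall>i<length xs. Pos (Eq (xs ! i) (xs ! i)) \<in> \<alpha>)"
    by (simp add: code_domain_facts_def code_length_list_encode code_nth_list_encode mem
        del: basic_code.simps)
  also have "\<dots> \<longleftrightarrow> domain_facts xs \<subseteq> \<alpha>"
    unfolding domain_facts_def image_subset_iff by (metis in_set_conv_nth)
  finally show ?thesis .
qed

lemma code_first_diff_list_encode:
  assumes "xs \<in> words id" "ys \<in> words id" "xs \<noteq> ys"
  shows "code_first_diff (list_encode xs) (list_encode ys) = first_diff xs ys"
  unfolding code_first_diff_def code_length_list_encode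
proof (rule bounded_least_eq)
  note fd = first_diff_words[OF assms]
  show "first_diff xs ys < length xs" by (fact fd(1))
  show "code_nth (first_diff xs ys) (list_encode xs) \<noteq> code_nth (first_diff xs ys) (list_encode ys)"
    using fd(1-3) by (simp add: code_nth_list_encode)
  show "first_diff xs ys \<le> j"
    if "code_nth j (list_encode xs) \<noteq> code_nth j (list_encode ys)" for j
  proof (rule ccontr)
    assume "\<not> first_diff xs ys \<le> j"
    then have "j < length xs" "j < length ys" "xs ! j = ys ! j" using fd by auto
    then show False using that by (simp add: code_nth_list_encode)
  qed
qed

lemma basic_code_parity:
  "basic_code (Pos a) mod 2 = 0" "basic_code (Neg a) mod 2 = 1"
  "basic_code (Pos a) div 2 = atom_code a" "basic_code (Neg a) div 2 = atom_code a"
  "atom_code (Lt c d) mod 2 = 0" "atom_code (Eq c d) mod 2 = 1"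
  "atom_code (Lt c d) div 2 = prod_encode (c, d)" "atom_code (Eq c d) div 2 = prod_encode (c, d)"
  by simp_all

lemma Gamma_code_pair_code:
  assumes "finite \<alpha>"
  shows "Gamma_code (pair_code (\<alpha>, \<phi>)) \<longleftrightarrow> Gamma_derives \<alpha> \<phi>"
proof -
  obtain xs ys where \<phi>: "\<phi> \<in> sentences_on (list_encode xs) (list_encode ys)"
    by (metis sentences_on_cover list_decode_inverse)
  have s: "set_decode (set_encode (basic_code ` \<alpha>)) = basic_code ` \<alpha>"
    using assms by simp
  then have mem: "basic_code \<psi> \<in> set_decode (set_encode (basic_code ` \<alpha>)) \<longleftrightarrow> \<psi> \<in> \<alpha>" for \<psi>
    by (auto simp: basic_code_eq_iff)
  have letters: "code_nth (code_first_diff (list_encode xs) (list_encode ys)) (list_encode xs)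
      = xs ! first_diff xs ys"
    "code_nth (code_first_diff (list_encode xs) (list_encode ys)) (list_encode ys)
      = ys ! first_diff xs ys"
    if "xs \<in> words id" "ys \<in> words id" "xs \<noteq> ys"
    using first_diff_words[OF that] by (simp_all add: code_first_diff_list_encode[OF that]
        code_nth_list_encode)
  note simps = basic_code_parity code_is_word_list_encode code_domain_facts_list_encode[OF s]
    list_encode_eq mem word_fact_def word_less_def
  from \<phi> show ?thesis
    unfolding Gamma_derives_iff[OF \<phi>] sentences_on_def Gamma_code_def Let_def pair_code_def
    by (elim insertE emptyE; cases "xs = ys")
      (auto simp: simps letters simp del: basic_code.simps atom_code.simps)
qed

lemma pair_code_Gamma: "pair_code ` Gamma = {x. Gamma_code x}"
proof (intro set_eqI iffI)
  fix x assume "x \<in> pair_code ` Gamma"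
  then show "x \<in> {x. Gamma_code x}"
    unfolding Gamma_def using Gamma_code_pair_code by auto
next
  fix x assume x: "x \<in> {x. Gamma_code x}"
  obtain s b where sb: "prod_decode x = (s, b)" by (cases "prod_decode x")
  let ?\<alpha> = "basic_decode ` set_decode s"
  have "basic_code ` ?\<alpha> = set_decode s"
    by (simp add: image_image basic_code_decode)
  then have "pair_code (?\<alpha>, basic_decode b) = x"
    unfolding pair_code_def using sb by (simp add: basic_code_decode) (metis prod_decode_inverse)
  moreover have "finite ?\<alpha>" by simp
  ultimately show "x \<in> pair_code ` Gamma"
    using x Gamma_code_pair_code unfolding Gamma_def by force
qed

lemma prim_rec_ext_Gamma_code: "prim_rec_ext 1 (\<lambda>xs. of_bool (Gamma_code (hd xs)))"
proof -
  have word: "prim_rec_ext n (\<lambda>xs. of_bool (code_is_word (F xs)))" if "prim_rec_ext n F" for n F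
    unfolding code_is_word_def using that
    by (intro prim_rec_ext_conj prim_rec_ext_eq prim_rec_ext_less prim_rec_ext_code_length
        prim_rec_ext_code_hd prim_rec_ext_Suc prim_rec_ext_const)
  have facts: "prim_rec_ext n (\<lambda>xs. of_bool (code_domain_facts (F xs) (G xs)))"
    if "prim_rec_ext n F" "prim_rec_ext n G" for n F G
  proof -
    have "prim_rec_ext (Suc n) (\<lambda>ys. of_bool (basic_code (Pos (Eq (code_nth (hd ys) (G (tl ys)))
        (code_nth (hd ys) (G (tl ys))))) \<in> set_decode (F (tl ys))))"
      using that
      by (intro prim_rec_ext_mem_set_decode prim_rec_ext_basic_code prim_rec_ext_code_nth
          prim_rec_ext_arg0 prim_rec_ext_tl) auto
    then show ?thesis
      unfolding code_domain_facts_def using that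
      by (intro prim_rec_ext_ball prim_rec_ext_code_length) auto
  qed
  have diff: "prim_rec_ext n (\<lambda>xs. code_first_diff (F xs) (G xs))"
    if "prim_rec_ext n F" "prim_rec_ext n G" for n F G
    unfolding code_first_diff_def using that
    by (intro prim_rec_ext_bounded_least prim_rec_ext_neq prim_rec_ext_code_nth
        prim_rec_ext_code_length prim_rec_ext_arg0 prim_rec_ext_tl) auto
  show ?thesis
    unfolding Gamma_code_def Let_def
    by (intro prim_rec_ext_conj prim_rec_ext_disj prim_rec_ext_eq prim_rec_ext_neq
        prim_rec_ext_mem_set_decode prim_rec_ext_mod prim_rec_ext_div prim_rec_ext_fst_prod_decode
        prim_rec_ext_snd_prod_decode word facts diff prim_rec_ext_code_nth prim_rec_ext_basic_code
        prim_rec_ext_const prim_rec_ext_arg0) simp_all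
qed

lemma enum_op_Gamma: "enum_op Gamma"
proof -
  have "prim_rec_ext 2 (\<lambda>xs. 1 - of_bool (Gamma_code (hd xs)))"
    using prim_rec_ext_diff[OF prim_rec_ext_const
        prim_rec_ext_compose1[OF prim_rec_ext_Gamma_code prim_rec_ext_arg0[of 2]]] by simp
  then obtain g where g: "prim_rec 2 g" "\<forall>xs. length xs = 2 \<longrightarrow> g xs = 1 - of_bool (Gamma_code (hd xs))"
    unfolding prim_rec_ext_def by blast
  then have "pair_code ` Gamma = {x. \<exists>y. g [x, y] = 0}"
    unfolding pair_code_Gamma by auto
  with g(1) have "ce (pair_code ` Gamma)" unfolding ce_def by blast
  then show ?thesis unfolding enum_op_def Gamma_def by auto
qed

section \<open>Order isomorphisms and well-orders\<close>

definition order_isomorphic ::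
    "'a set \<Rightarrow> ('a \<Rightarrow> 'a \<Rightarrow> bool) \<Rightarrow> 'b set \<Rightarrow> ('b \<Rightarrow> 'b \<Rightarrow> bool) \<Rightarrow> bool"
  where "order_isomorphic A lt B lt' \<longleftrightarrow>
    (\<exists>h. bij_betw h A B \<and> (\<forall>x\<in>A. \<forall>y\<in>A. lt x y \<longleftrightarrow> lt' (h x) (h y)))"

lemma order_isomorphic_sym:
  assumes "order_isomorphic A lt B lt'"
  shows "order_isomorphic B lt' A lt"
proof -
  obtain h where h: "bij_betw h A B" "\<forall>x\<in>A. \<forall>y\<in>A. lt x y \<longleftrightarrow> lt' (h x) (h y)"
    using assms unfolding order_isomorphic_def by blast
  have "lt' x y \<longleftrightarrow> lt (inv_into A h x) (inv_into A h y)" if "x \<in> B" "y \<in> B" for x y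
    using h that bij_betw_inv_into_right[OF h(1)] bij_betwE[OF bij_betw_inv_into[OF h(1)]]
    by metis
  then show ?thesis
    unfolding order_isomorphic_def using bij_betw_inv_into[OF h(1)] by blast
qed

lemma order_isomorphic_trans:
  assumes "order_isomorphic A lt B lt'" "order_isomorphic B lt' C lt''"
  shows "order_isomorphic A lt C lt''"
proof -
  obtain f where f: "bij_betw f A B" "\<forall>x\<in>A. \<forall>y\<in>A. lt x y \<longleftrightarrow> lt' (f x) (f y)"
    using assms(1) unfolding order_isomorphic_def by blast
  obtain g where g: "bij_betw g B C" "\<forall>x\<in>B. \<forall>y\<in>B. lt' x y \<longleftrightarrow> lt'' (g x) (g y)"
    using assms(2) unfolding order_isomorphic_def by blast
  have "lt x y \<longleftrightarrow> lt'' (g (f x)) (g (f y))" if "x \<in> A" "y \<in> A" for x y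
  proof -
    have "f x \<in> B" "f y \<in> B" using f(1) that bij_betwE by blast+
    then show ?thesis using f(2) g(2) that by blast
  qed
  then show ?thesis
    unfolding order_isomorphic_def using bij_betw_trans[OF f(1) g(1)] by auto
qed

definition strict_mono_into ::
    "('a \<Rightarrow> 'b) \<Rightarrow> 'a set \<Rightarrow> ('a \<Rightarrow> 'a \<Rightarrow> bool) \<Rightarrow> 'b set \<Rightarrow> ('b \<Rightarrow> 'b \<Rightarrow> bool) \<Rightarrow> bool"
  where "strict_mono_into f A lt B lt' \<longleftrightarrow>
    (\<forall>x\<in>A. f x \<in> B) \<and> (\<forall>x\<in>A. \<forall>y\<in>A. lt x y \<longrightarrow> lt' (f x) (f y))"

definition strict_well_order_on :: "'a set \<Rightarrow> ('a \<Rightarrow> 'a \<Rightarrow> bool) \<Rightarrow> bool" where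
  "strict_well_order_on A lt \<longleftrightarrow> (\<forall>x\<in>A. \<not> lt x x)
     \<and> (\<forall>x\<in>A. \<forall>y\<in>A. \<forall>z\<in>A. lt x y \<longrightarrow> lt y z \<longrightarrow> lt x z)
     \<and> (\<forall>x\<in>A. \<forall>y\<in>A. x \<noteq> y \<longrightarrow> lt x y \<or> lt y x) \<and> wf {(x, y). x \<in> A \<and> y \<in> A \<and> lt x y}"

definition refl_rel_on :: "'a set \<Rightarrow> ('a \<Rightarrow> 'a \<Rightarrow> bool) \<Rightarrow> 'a rel" where
  "refl_rel_on A lt = {(x, y). x \<in> A \<and> y \<in> A \<and> (x = y \<or> lt x y)}"

lemma Field_refl_rel_on: "Field (refl_rel_on A lt) = A"
  unfolding refl_rel_on_def Field_def by blast

lemma Well_order_refl_rel_on: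
  assumes "strict_well_order_on A lt"
  shows "Well_order (refl_rel_on A lt)"
proof -
  have irrefl: "\<forall>x\<in>A. \<not> lt x x" and trans: "\<forall>x\<in>A. \<forall>y\<in>A. \<forall>z\<in>A. lt x y \<longrightarrow> lt y z \<longrightarrow> lt x z"
    and total: "\<forall>x\<in>A. \<forall>y\<in>A. x \<noteq> y \<longrightarrow> lt x y \<or> lt y x"
    and wf: "wf {(x, y). x \<in> A \<and> y \<in> A \<and> lt x y}"
    using assms unfolding strict_well_order_on_def by blast+
  have "refl_rel_on A lt - Id = {(x, y). x \<in> A \<and> y \<in> A \<and> lt x y}"
    using irrefl unfolding refl_rel_on_def by auto
  with wf have "wf (refl_rel_on A lt - Id)" by simp
  moreover have "linear_order_on A (refl_rel_on A lt)"
    unfolding linear_order_on_def partial_order_on_def preorder_on_def refl_on_def trans_def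
      antisym_def total_on_def refl_rel_on_def
    using irrefl trans total by blast
  ultimately show ?thesis unfolding well_order_on_def Field_refl_rel_on by simp
qed

lemma strict_mono_into_self_not_less:
  assumes "strict_well_order_on A lt" "strict_mono_into H A lt A lt" "x \<in> A"
  shows "\<not> lt (H x) x"
proof -
  have H: "\<forall>x\<in>A. H x \<in> A" "\<forall>x\<in>A. \<forall>y\<in>A. lt x y \<longrightarrow> lt (H x) (H y)"
    using assms(2) unfolding strict_mono_into_def by blast+
  let ?R = "{(x, y). x \<in> A \<and> y \<in> A \<and> lt x y}"
  have "wf ?R" using assms(1) unfolding strict_well_order_on_def by blast
  then have "x \<in> A \<longrightarrow> \<not> lt (H x) x"
  proof (induction x rule: wf_induct_rule)
    case (less x)
    show ?case
    proof (intro impI notI)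
      assume x: "x \<in> A" and lt: "lt (H x) x"
      have Hx: "H x \<in> A" using H(1) x by blast
      then have "\<not> lt (H (H x)) (H x)" using less.IH[of "H x"] x lt by blast
      moreover have "lt (H (H x)) (H x)" using H(2) Hx x lt by blast
      ultimately show False by contradiction
    qed
  qed
  with assms(3) show ?thesis by blast
qed

lemma strict_mono_into_iff:
  assumes A: "strict_well_order_on A lt" and B: "strict_well_order_on B lt'"
    and f: "strict_mono_into f A lt B lt'" and xy: "x \<in> A" "y \<in> A"
  shows "lt' (f x) (f y) \<longleftrightarrow> lt x y"
proof
  have totA: "\<forall>x\<in>A. \<forall>y\<in>A. x \<noteq> y \<longrightarrow> lt x y \<or> lt y x"
    using A unfolding strict_well_order_on_def by blast
  have irrB: "\<forall>x\<in>B. \<not> lt' x x" and trB: "\<forall>x\<in>B. \<forall>y\<in>B. \<forall>z\<in>B. lt' x y \<longrightarrow> lt' y z \<longrightarrow> lt' x z"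
    using B unfolding strict_well_order_on_def by blast+
  have fB: "f x \<in> B" "f y \<in> B" using f xy unfolding strict_mono_into_def by blast+
  assume fxy: "lt' (f x) (f y)"
  then have "x \<noteq> y" using irrB fB by metis
  then have "lt x y \<or> lt y x" using totA xy by blast
  moreover have "\<not> lt' (f y) (f x)" using fxy trB irrB fB by metis
  ultimately show "lt x y" using f xy unfolding strict_mono_into_def by blast
qed (use f xy in \<open>auto simp: strict_mono_into_def\<close>)

lemma embed_strict_mono_into:
  assumes A: "strict_well_order_on A lt" and B: "strict_well_order_on B lt'"
    and f: "embed (refl_rel_on A lt) (refl_rel_on B lt') f"
  shows "strict_mono_into f A lt B lt'"
proof -
  have irrA: "\<forall>x\<in>A. \<not> lt x x" using A unfolding strict_well_order_on_def by blast
  have compat: "compat (refl_rel_on A lt) (refl_rel_on B lt') f" and inj: "inj_on f A"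
    using f embed_iff_compat_inj_on_ofilter[OF Well_order_refl_rel_on[OF A]
        Well_order_refl_rel_on[OF B]]
    unfolding Field_refl_rel_on by auto
  have fB: "f x \<in> B" if "x \<in> A" for x
  proof -
    have "(x, x) \<in> refl_rel_on A lt" using that unfolding refl_rel_on_def by blast
    then show ?thesis using compat unfolding compat_def refl_rel_on_def by blast
  qed
  have "lt' (f x) (f y)" if "x \<in> A" "y \<in> A" "lt x y" for x y
  proof -
    have "(x, y) \<in> refl_rel_on A lt" using that unfolding refl_rel_on_def by blast
    then have "(f x, f y) \<in> refl_rel_on B lt'" using compat unfolding compat_def by blast
    moreover have "f x \<noteq> f y" using inj that irrA by (metis inj_on_contraD)
    ultimately show ?thesis unfolding refl_rel_on_def by auto
  qed
  then show ?thesis unfolding strict_mono_into_def using fB by blast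
qed

text \<open>An embedding onto an initial segment that misses some \<open>b\<close> would make \<open>f \<circ> G\<close> send \<open>b\<close>
  below itself.\<close>
lemma embed_order_isomorphic_if_strict_mono_back:
  assumes A: "strict_well_order_on A lt" and B: "strict_well_order_on B lt'"
    and f: "embed (refl_rel_on A lt) (refl_rel_on B lt') f"
    and G: "strict_mono_into G B lt' A lt"
  shows "order_isomorphic A lt B lt'"
proof -
  have totB: "\<forall>x\<in>B. \<forall>y\<in>B. x \<noteq> y \<longrightarrow> lt' x y \<or> lt' y x"
    using B unfolding strict_well_order_on_def by blast
  have inj: "inj_on f A" and ofilter: "wo_rel.ofilter (refl_rel_on B lt') (f ` A)"
    using f embed_iff_compat_inj_on_ofilter[OF Well_order_refl_rel_on[OF A]
        Well_order_refl_rel_on[OF B]]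
    unfolding Field_refl_rel_on by auto
  have f_mono: "strict_mono_into f A lt B lt'" by (rule embed_strict_mono_into[OF A B f])
  have "f ` A = B"
  proof (rule ccontr)
    assume "f ` A \<noteq> B"
    then obtain b where b: "b \<in> B" "b \<notin> f ` A" using f_mono unfolding strict_mono_into_def by blast
    have GA: "G b \<in> A" using G b(1) unfolding strict_mono_into_def by blast
    then have fGb: "f (G b) \<in> B" using f_mono unfolding strict_mono_into_def by blast
    have H: "strict_mono_into (\<lambda>x. f (G x)) B lt' B lt'"
      using G f_mono unfolding strict_mono_into_def by blast
    have "under (refl_rel_on B lt') (f (G b)) \<subseteq> f ` A"
      using ofilter GA unfolding Order_Relation.ofilter_def by blast
    then have "\<not> lt' b (f (G b))" using b fGb unfolding under_def refl_rel_on_def by blast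
    moreover have "b \<noteq> f (G b)" using b GA by blast
    ultimately have "lt' (f (G b)) b" using totB b(1) fGb by blast
    then show False using strict_mono_into_self_not_less[OF B H b(1)] by blast
  qed
  then have "bij_betw f A B" using inj unfolding bij_betw_def by blast
  then show ?thesis
    unfolding order_isomorphic_def using strict_mono_into_iff[OF A B f_mono] by blast
qed

lemma order_isomorphic_if_strict_mono_both_ways:
  assumes A: "strict_well_order_on A lt" and B: "strict_well_order_on B lt'"
    and F: "strict_mono_into F A lt B lt'" and G: "strict_mono_into G B lt' A lt"
  shows "order_isomorphic A lt B lt'"
  using wellorders_totally_ordered[OF Well_order_refl_rel_on[OF A] Well_order_refl_rel_on[OF B]]
proof (elim disjE exE)
  fix f assume "embed (refl_rel_on A lt) (refl_rel_on B lt') f"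
  then show ?thesis using embed_order_isomorphic_if_strict_mono_back[OF A B _ G] by blast
next
  fix f assume "embed (refl_rel_on B lt') (refl_rel_on A lt) f"
  then show ?thesis
    using embed_order_isomorphic_if_strict_mono_back[OF B A _ F] order_isomorphic_sym by blast
qed

lemma oo_less_irrefl: "\<not> oo_less f f"
  unfolding oo_less_def by auto

lemma oo_less_trans: "oo_less f g \<Longrightarrow> oo_less g h \<Longrightarrow> oo_less f h"
  unfolding oo_less_def
proof (elim exE conjE)
  fix n m assume "f n < g n" "\<forall>k>n. f k = g k" "g m < h m" "\<forall>k>m. g k = h k"
  then show "\<exists>n. f n < h n \<and> (\<forall>k>n. f k = h k)"
    by (cases n m rule: linorder_cases) (auto intro: exI[of _ "max n m"])
qed

lemma oo_less_asym: "oo_less f g \<Longrightarrow> \<not> oo_less g f"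
  using oo_less_trans oo_less_irrefl by blast

lemma oo_less_total:
  assumes "f \<in> omega_omega" "g \<in> omega_omega" "f \<noteq> g"
  shows "oo_less f g \<or> oo_less g f"
proof -
  let ?S = "{k. f k \<noteq> g k}"
  have "?S \<subseteq> {k. f k \<noteq> 0} \<union> {k. g k \<noteq> 0}" by auto
  moreover have "finite ({k. f k \<noteq> 0} \<union> {k. g k \<noteq> 0})"
    using assms(1,2) unfolding omega_omega_def by simp
  ultimately have fin: "finite ?S" by (rule finite_subset)
  have ne: "?S \<noteq> {}" using assms(3) by auto
  define n where "n = Max ?S"
  have diff: "f n \<noteq> g n" using Max_in[OF fin ne] unfolding n_def by simp
  have above: "f m = g m" if "n < m" for m
  proof (rule ccontr)
    assume "f m \<noteq> g m"
    then have "m \<le> n" unfolding n_def using Max_ge[OF fin] by simp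
    with that show False by simp
  qed
  from diff consider "f n < g n" | "g n < f n" by linarith
  then show ?thesis
  proof cases
    case 1
    then have "oo_less f g" unfolding oo_less_def using above by (intro exI[of _ n]) simp
    then show ?thesis ..
  next
    case 2
    then have "oo_less g f" unfolding oo_less_def using above by (intro exI[of _ n]) simp
    then show ?thesis ..
  qed
qed

text \<open>A finitely supported \<open>f\<close> is the multiplicity function of a multiset, and \<open>oo_less\<close> is
  the multiset order.\<close>
lemma wf_oo_less: "wf {(f, g). f \<in> omega_omega \<and> g \<in> omega_omega \<and> oo_less f g}"
proof -
  have count: "count (Abs_multiset f) = f" if "f \<in> omega_omega" for f
  proof -
    have "{x. 0 < f x} = {x. f x \<noteq> 0}" by auto
    then show ?thesis using that by (intro count_Abs_multiset) (simp add: omega_omega_def)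
  qed
  have "Abs_multiset f < Abs_multiset g"
    if f: "f \<in> omega_omega" and g: "g \<in> omega_omega" and fg: "oo_less f g" for f g
    unfolding less_multiset\<^sub>H\<^sub>O count[OF f] count[OF g]
  proof (intro conjI allI impI)
    obtain n where n: "f n < g n" "\<forall>m>n. f m = g m" using fg unfolding oo_less_def by blast
    show "Abs_multiset f \<noteq> Abs_multiset g"
    proof
      assume "Abs_multiset f = Abs_multiset g"
      then have "f = g" using count[OF f] count[OF g] by metis
      then show False using n(1) by simp
    qed
    fix y assume "g y < f y"
    then have "y < n" using n by (metis less_imp_not_less linorder_neqE_nat order.strict_implies_not_eq)
    then show "\<exists>x>y. f x < g x" using n(1) by blast
  qed
  then have "{(f, g). f \<in> omega_omega \<and> g \<in> omega_omega \<and> oo_less f g}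
      \<subseteq> inv_image {(M, N). M < (N :: nat multiset)} Abs_multiset"
    by auto
  moreover have "wf (inv_image {(M, N). M < (N :: nat multiset)} Abs_multiset)"
    by (intro wf_inv_image wellorder_class.wf)
  ultimately show ?thesis by (rule wf_subset[rotated])
qed

lemma strict_well_order_on_omega_omega: "strict_well_order_on omega_omega oo_less"
  unfolding strict_well_order_on_def
  using oo_less_irrefl oo_less_trans oo_less_total wf_oo_less by blast

definition oo_degree :: "(nat \<Rightarrow> nat) \<Rightarrow> nat" where
  "oo_degree f = (if \<forall>k. f k = 0 then 0 else Max {k. f k \<noteq> 0})"

lemma oo_degree_ge: "f \<in> omega_omega \<Longrightarrow> f k \<noteq> 0 \<Longrightarrow> k \<le> oo_degree f"
  unfolding oo_degree_def omega_omega_def by (auto intro: Max_ge)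

lemma oo_degree_coeff: "f \<in> omega_omega \<Longrightarrow> f k \<noteq> 0 \<Longrightarrow> f (oo_degree f) \<noteq> 0"
  unfolding oo_degree_def omega_omega_def using Max_in[of "{k. f k \<noteq> 0}"] by auto

lemma coeff_above_oo_degree: "f \<in> omega_omega \<Longrightarrow> oo_degree f < k \<Longrightarrow> f k = 0"
  using oo_degree_ge by (meson not_le)

lemma oo_degree_mono:
  assumes f: "f \<in> omega_omega" and h: "h \<in> omega_omega" and fh: "oo_less f h"
  shows "oo_degree f \<le> oo_degree h"
proof (rule ccontr)
  assume "\<not> ?thesis"
  then have less: "oo_degree h < oo_degree f" by simp
  obtain n where n: "f n < h n" "\<forall>m>n. f m = h m" using fh unfolding oo_less_def by blast
  have "n \<le> oo_degree h" using n(1) oo_degree_ge[OF h] by simp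
  then have "f (oo_degree f) = h (oo_degree f)" using n(2) less by simp
  also have "\<dots> = 0" using coeff_above_oo_degree[OF h less] .
  finally have "\<forall>k. f k = 0" using oo_degree_coeff[OF f] by blast
  then show False using less unfolding oo_degree_def by simp
qed

section \<open>\<open>\<omega>\<^sup>\<omega>\<close> as a sum of powers of \<open>\<omega>\<close>\<close>

lemma word_less_nat_total:
  fixes ns ms :: "nat list"
  assumes "ns \<in> words g" "ms \<in> words g" "ns \<noteq> ms"
  shows "word_less (<) ns ms \<or> word_less (<) ms ns"
proof -
  have "ns ! first_diff ns ms \<noteq> ms ! first_diff ns ms" by (rule first_diff_words(3)[OF assms])
  then have "ns ! first_diff ns ms < ms ! first_diff ns ms
      \<or> ms ! first_diff ns ms < ns ! first_diff ns ms"
    by arith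
  then show ?thesis unfolding word_less_def first_diff_commute[of ms ns] using assms(3) by auto
qed

lemma word_less_nat_intro:
  fixes xs ys :: "nat list"
  assumes "i < length xs" "i < length ys" "\<And>j. j < i \<Longrightarrow> xs ! j = ys ! j" "xs ! i < ys ! i"
  shows "word_less (<) xs ys"
proof -
  have "first_diff xs ys = i" using assms by (intro first_diff_eqI) auto
  then show ?thesis unfolding word_less_def using assms(4) by auto
qed

definition running_max :: "(nat \<Rightarrow> nat) \<Rightarrow> nat \<Rightarrow> nat" where
  "running_max g n = Max (g ` {..n})"

lemma running_max_ge: "g n \<le> running_max g n"
  unfolding running_max_def by (intro Max_ge) auto

lemma running_max_mono: "n \<le> m \<Longrightarrow> running_max g n \<le> running_max g m"
  unfolding running_max_def by (intro Max_mono) auto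

text \<open>The word \<open>n b\<^sub>1 \<dots> b\<^sub>g\<^sub>n\<close> becomes \<open>\<omega>\<^bsup>K\<^esup>(n + 1) + \<omega>\<^bsup>K-1\<^esup>b\<^sub>1 + \<dots> + \<omega>\<^bsup>K-g n\<^esup>b\<^sub>g\<^sub>n\<close>
  with \<open>K = running_max g n\<close>; using the running maximum makes the leading exponent monotone in \<open>n\<close>.\<close>
definition words_to_oo :: "(nat \<Rightarrow> nat) \<Rightarrow> nat list \<Rightarrow> nat \<Rightarrow> nat" where
  "words_to_oo g ns k =
     (let n = hd ns; K = running_max g n in
      if k = K then Suc n else if k < K \<and> K - 1 - k < g n then ns ! Suc (K - 1 - k) else 0)"

lemma words_to_oo_above: "running_max g (hd ns) < k \<Longrightarrow> words_to_oo g ns k = 0"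
  unfolding words_to_oo_def by auto

lemma words_to_oo_in_omega_omega: "words_to_oo g ns \<in> omega_omega"
proof -
  have "{k. words_to_oo g ns k \<noteq> 0} \<subseteq> {..running_max g (hd ns)}"
    using words_to_oo_above by (auto simp: not_less[symmetric])
  then show ?thesis unfolding omega_omega_def mem_Collect_eq by (rule finite_subset) simp
qed

lemma words_to_oo_less_if_hd_less:
  fixes g :: "nat \<Rightarrow> nat"
  assumes "hd ns < hd ms"
  shows "oo_less (words_to_oo g ns) (words_to_oo g ms)"
proof -
  define K where "K = running_max g (hd ms)"
  have K: "running_max g (hd ns) \<le> K"
    unfolding K_def using assms by (intro running_max_mono) simp
  have "words_to_oo g ns K < words_to_oo g ms K"
  proof (cases "running_max g (hd ns) = K")
    case True
    then show ?thesis using assms by (simp add: words_to_oo_def K_def)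
  next
    case False
    then show ?thesis using K words_to_oo_above[of g ns K] by (simp add: words_to_oo_def K_def)
  qed
  moreover have "words_to_oo g ns k = words_to_oo g ms k" if "K < k" for k
    using words_to_oo_above[of g ns k] words_to_oo_above[of g ms k] K that
    unfolding K_def by simp
  ultimately show ?thesis unfolding oo_less_def by blast
qed

lemma words_to_oo_less_if_hd_eq:
  fixes g :: "nat \<Rightarrow> nat"
  assumes ns: "ns \<in> words g" and ms: "ms \<in> words g" and less: "word_less (<) ns ms"
    and hd: "hd ns = hd ms"
  shows "oo_less (words_to_oo g ns) (words_to_oo g ms)"
proof -
  have ne: "ns \<noteq> ms" using less unfolding word_less_def by simp
  note fd = first_diff_words[OF ns ms ne]
  let ?i = "first_diff ns ms"
  have lt: "ns ! ?i < ms ! ?i" using less unfolding word_less_def by simp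
  have "?i \<noteq> 0"
  proof
    assume "?i = 0"
    then have "ns ! 0 \<noteq> ms ! 0" using fd(3) by simp
    moreover have "ns \<noteq> []" "ms \<noteq> []" using ns ms by (simp_all add: words_def)
    ultimately show False using hd by (simp add: hd_conv_nth)
  qed
  define n where "n = hd ns"
  define K where "K = running_max g n"
  define j where "j = ?i - 1"
  have ij: "?i = Suc j" using \<open>?i \<noteq> 0\<close> unfolding j_def by simp
  have "length ns = Suc (g n)" using ns unfolding words_def n_def by simp
  then have jg: "j < g n" using fd(1) ij by simp
  have gK: "g n \<le> K" unfolding K_def by (rule running_max_ge)
  define k0 where "k0 = K - 1 - j"
  have k0: "k0 < K" "K - 1 - k0 = j" using jg gK unfolding k0_def by auto
  have eval: "words_to_oo g xs k =
      (if k = K then Suc n else if k < K \<and> K - 1 - k < g n then xs ! Suc (K - 1 - k) else 0)"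
    if "hd xs = n" for xs k
    using that unfolding words_to_oo_def K_def Let_def by simp
  have at: "words_to_oo g ns k0 < words_to_oo g ms k0"
    using k0 jg lt ij by (simp add: eval n_def hd)
  have "words_to_oo g ns k = words_to_oo g ms k" if "k0 < k" for k
  proof -
    have "ns ! Suc (K - 1 - k) = ms ! Suc (K - 1 - k)" if "k < K"
    proof (rule fd(4))
      show "Suc (K - 1 - k) < ?i" using \<open>k0 < k\<close> k0 that ij by linarith
    qed
    then show ?thesis by (simp add: eval n_def hd)
  qed
  then show ?thesis unfolding oo_less_def using at by blast
qed

lemma words_to_oo_strict_mono:
  fixes g :: "nat \<Rightarrow> nat"
  shows "strict_mono_into (words_to_oo g) (words g) (word_less (<)) omega_omega oo_less"
  unfolding strict_mono_into_def
proof (intro conjI ballI impI)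
  fix ns ms assume ns: "ns \<in> words g" and ms: "ms \<in> words g" and less: "word_less (<) ns ms"
  show "oo_less (words_to_oo g ns) (words_to_oo g ms)"
  proof (cases "hd ns = hd ms")
    case False
    then have "first_diff ns ms = 0"
      using ns ms by (intro first_diff_eqI) (auto simp: words_def hd_conv_nth)
    then have "hd ns < hd ms"
      using less ns ms by (auto simp: word_less_def words_def hd_conv_nth)
    then show ?thesis by (rule words_to_oo_less_if_hd_less)
  qed (rule words_to_oo_less_if_hd_eq[OF ns ms less])
qed (rule words_to_oo_in_omega_omega)

lemma strict_well_order_on_words:
  fixes g :: "nat \<Rightarrow> nat"
  shows "strict_well_order_on (words g) (word_less (<))"
proof -
  note emb = words_to_oo_strict_mono[unfolded strict_mono_into_def]
  have irrefl: "\<forall>x\<in>words g. \<not> word_less (<) x x" unfolding word_less_def by simp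
  have total: "\<forall>x\<in>words g. \<forall>y\<in>words g. x \<noteq> y \<longrightarrow> word_less (<) x y \<or> word_less (<) y x"
    using word_less_nat_total by blast
  have trans: "word_less (<) x z"
    if W: "x \<in> words g" "y \<in> words g" "z \<in> words g" and "word_less (<) x y" "word_less (<) y z"
    for x y z
  proof -
    have xz: "oo_less (words_to_oo g x) (words_to_oo g z)"
      using emb that by (blast intro: oo_less_trans)
    then have "x \<noteq> z" using oo_less_irrefl by blast
    moreover have "\<not> word_less (<) z x" using emb W xz oo_less_asym by blast
    ultimately show ?thesis using word_less_nat_total W by blast
  qed
  have "{(x, y). x \<in> words g \<and> y \<in> words g \<and> word_less (<) x y}
     \<subseteq> inv_image {(f, h). f \<in> omega_omega \<and> h \<in> omega_omega \<and> oo_less f h} (words_to_oo g)"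
    using emb by auto
  then have "wf {(x, y). x \<in> words g \<and> y \<in> words g \<and> word_less (<) x y}"
    using wf_subset[OF wf_inv_image[OF wf_oo_less]] by blast
  then show ?thesis unfolding strict_well_order_on_def using irrefl total trans by blast
qed

lemma inj_unbounded:
  fixes g :: "nat \<Rightarrow> nat"
  assumes "inj g"
  shows "\<exists>n>m. N \<le> g n"
proof -
  have "finite (g -` {..<N})" using assms by (intro finite_vimageI) auto
  moreover have "g -` {..<N} = {n. g n < N}" by auto
  ultimately obtain B where B: "\<forall>n\<in>{n. g n < N}. n \<le> B"
    using finite_nat_set_iff_bounded_le by metis
  show ?thesis
    by (rule exI[of _ "Suc (max m B)"]) (use B in \<open>auto simp: not_less[symmetric]\<close>)
qed

primrec index_above :: "(nat \<Rightarrow> nat) \<Rightarrow> nat \<Rightarrow> nat" where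
  "index_above g 0 = (LEAST n. 0 < g n)"
| "index_above g (Suc K) = (LEAST n. index_above g K < n \<and> Suc K < g n)"

lemma index_above_spec:
  fixes g :: "nat \<Rightarrow> nat"
  assumes "inj g"
  shows "K < g (index_above g K)" "index_above g K < index_above g (Suc K)"
proof -
  obtain n where "index_above g K < n \<and> Suc K < g n"
    using inj_unbounded[OF assms] by (meson Suc_le_eq)
  then show "index_above g K < index_above g (Suc K)" by (auto intro: LeastI2)
  show "K < g (index_above g K)"
  proof (cases K)
    case 0
    obtain n where "0 < n" "1 \<le> g n" using inj_unbounded[OF assms] by blast
    then have "0 < g n" by simp
    then show ?thesis using 0 by (auto intro: LeastI)
  next
    case (Suc K')
    obtain n where "index_above g K' < n \<and> Suc K' < g n"
      using inj_unbounded[OF assms] by (meson Suc_le_eq)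
    then show ?thesis using Suc by (auto intro: LeastI2)
  qed
qed

lemma strict_mono_index_above: "inj g \<Longrightarrow> strict_mono (index_above g)"
  using index_above_spec(2) by (simp add: strict_mono_Suc_iff)

text \<open>\<open>f\<close> becomes the word \<open>n f(L - 1) \<dots> f(0)\<close>, where \<open>L = g n\<close> exceeds the degree of \<open>f\<close>.\<close>
definition oo_to_words :: "(nat \<Rightarrow> nat) \<Rightarrow> (nat \<Rightarrow> nat) \<Rightarrow> nat list" where
  "oo_to_words g f =
     (let n = index_above g (oo_degree f) in n # map (\<lambda>i. f (g n - 1 - i)) [0..<g n])"

lemma oo_to_words_less_if_same_degree:
  fixes g :: "nat \<Rightarrow> nat"
  assumes g: "inj g" and h: "h \<in> omega_omega" and fh: "oo_less f h"
    and same: "oo_degree f = oo_degree h"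
  shows "word_less (<) (oo_to_words g f) (oo_to_words g h)"
proof -
  obtain n where n: "f n < h n" "\<forall>m>n. f m = h m" using fh unfolding oo_less_def by blast
  have nh: "n \<le> oo_degree h" using n(1) oo_degree_ge[OF h] by simp
  define L where "L = g (index_above g (oo_degree h))"
  have L: "oo_degree h < L" using index_above_spec(1)[OF g] unfolding L_def by simp
  have words: "oo_to_words g f = index_above g (oo_degree h) # map (\<lambda>i. f (L - 1 - i)) [0..<L]"
    "oo_to_words g h = index_above g (oo_degree h) # map (\<lambda>i. h (L - 1 - i)) [0..<L]"
    unfolding oo_to_words_def L_def Let_def same by simp_all
  have i: "L - 1 - n < L" using L nh by linarith
  show ?thesis
  proof (rule word_less_nat_intro[of "Suc (L - 1 - n)"])
    show "Suc (L - 1 - n) < length (oo_to_words g f)" "Suc (L - 1 - n) < length (oo_to_words g h)"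
      using i by (simp_all add: words)
    show "oo_to_words g f ! Suc (L - 1 - n) < oo_to_words g h ! Suc (L - 1 - n)"
      using i L nh n(1) by (simp add: words)
    show "oo_to_words g f ! j = oo_to_words g h ! j" if "j < Suc (L - 1 - n)" for j
    proof (cases j)
      case (Suc j')
      then have "n < L - 1 - j'" "j' < L" using that i by linarith+
      then show ?thesis using Suc n(2) by (simp add: words)
    qed (simp add: words)
  qed
qed

lemma oo_to_words_strict_mono:
  fixes g :: "nat \<Rightarrow> nat"
  assumes g: "inj g"
  shows "strict_mono_into (oo_to_words g) omega_omega oo_less (words g) (word_less (<))"
  unfolding strict_mono_into_def
proof (intro conjI ballI impI)
  fix f show "oo_to_words g f \<in> words g"
    unfolding oo_to_words_def words_def Let_def by simp
next
  fix f h assume f: "f \<in> omega_omega" and h: "h \<in> omega_omega" and fh: "oo_less f h"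
  show "word_less (<) (oo_to_words g f) (oo_to_words g h)"
  proof (cases "oo_degree f = oo_degree h")
    case False
    then have "oo_degree f < oo_degree h" using oo_degree_mono[OF f h fh] by simp
    then have "index_above g (oo_degree f) < index_above g (oo_degree h)"
      by (rule strict_monoD[OF strict_mono_index_above[OF g]])
    then show ?thesis
      by (intro word_less_nat_intro[of 0]) (simp_all add: oo_to_words_def Let_def)
  qed (rule oo_to_words_less_if_same_degree[OF g h fh])
qed

lemma words_order_isomorphic_omega_omega:
  fixes g :: "nat \<Rightarrow> nat"
  assumes "inj g"
  shows "order_isomorphic (words g) (word_less (<)) omega_omega oo_less"
  using order_isomorphic_if_strict_mono_both_ways[OF strict_well_order_on_words
      strict_well_order_on_omega_omega words_to_oo_strict_mono oo_to_words_strict_mono[OF assms]] .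

lemma iso_to_iff_order_isomorphic:
  "iso_to S C lt \<longleftrightarrow> order_isomorphic (fst S) (\<lambda>x y. (x, y) \<in> snd S) C lt"
  unfolding iso_to_def order_isomorphic_def ..

lemma struc_iso_iff_order_isomorphic:
  "struc_iso S T \<longleftrightarrow>
     order_isomorphic (fst S) (\<lambda>x y. (x, y) \<in> snd S) (fst T) (\<lambda>x y. (x, y) \<in> snd T)"
  unfolding struc_iso_def order_isomorphic_def ..

lemma order_isomorphic_word_order:
  "order_isomorphic {xs \<in> words id. set xs \<subseteq> fst S} (word_less (\<lambda>a b. (a, b) \<in> snd S))
     (fst (word_order S)) (\<lambda>x y. (x, y) \<in> snd (word_order S))"
  unfolding order_isomorphic_def
proof (intro exI conjI)
  show "bij_betw list_encode {xs \<in> words id. set xs \<subseteq> fst S} (fst (word_order S))"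
    unfolding bij_betw_def word_order_def using inj_list_encode by simp
qed (auto simp: word_order_iff)

lemma order_isomorphic_words_map:
  assumes f: "bij_betw f D (UNIV :: nat set)" and lt: "\<And>x y. x \<in> D \<Longrightarrow> y \<in> D \<Longrightarrow> lt x y \<longleftrightarrow> f x < f y"
  shows "order_isomorphic {xs \<in> words id. set xs \<subseteq> D} (word_less lt)
    (words (inv_into D f)) (word_less (<))"
  unfolding order_isomorphic_def
proof (intro exI conjI ballI)
  let ?g = "inv_into D f"
  have inj: "inj_on f D" and gD: "?g n \<in> D" and fg: "f (?g n) = n" for n
    using f by (auto simp: bij_betw_def inv_into_into f_inv_into_f)
  have gf: "?g (f x) = x" if "x \<in> D" for x using inj that by (rule inv_into_f_f)
  show "bij_betw (map f) {xs \<in> words id. set xs \<subseteq> D} (words ?g)"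
  proof (rule bij_betw_byWitness[where f' = "map ?g"])
    show "\<forall>xs\<in>{xs \<in> words id. set xs \<subseteq> D}. map ?g (map f xs) = xs"
    proof
      fix xs assume "xs \<in> {xs \<in> words id. set xs \<subseteq> D}"
      then have "set xs \<subseteq> D" by simp
      then show "map ?g (map f xs) = xs" using gf by (induction xs) auto
    qed
    show "\<forall>ns\<in>words ?g. map f (map ?g ns) = ns"
    proof
      fix ns :: "nat list" show "map f (map ?g ns) = ns" using fg by (induction ns) auto
    qed
    show "map f ` {xs \<in> words id. set xs \<subseteq> D} \<subseteq> words ?g"
    proof
      fix ns assume "ns \<in> map f ` {xs \<in> words id. set xs \<subseteq> D}"
      then obtain xs where xs: "ns = map f xs" "xs \<in> words id" "set xs \<subseteq> D" by blast
      then have "hd xs \<in> D" by (auto simp: words_def)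
      then show "ns \<in> words ?g" using xs gf by (simp add: words_def hd_map)
    qed
    show "map ?g ` words ?g \<subseteq> {xs \<in> words id. set xs \<subseteq> D}"
      using gD by (auto simp: words_def hd_map)
  qed
  fix xs ys assume "xs \<in> {xs \<in> words id. set xs \<subseteq> D}" "ys \<in> {xs \<in> words id. set xs \<subseteq> D}"
  then show "word_less lt xs ys \<longleftrightarrow> word_less (<) (map f xs) (map f ys)"
    using word_less_map[of xs id ys f D "(<)" lt] inj lt by simp
qed

lemma word_order_iso_to_omega_omega:
  assumes "iso_to A (UNIV :: nat set) (<)"
  shows "iso_to (word_order A) omega_omega oo_less"
proof -
  obtain f where f: "bij_betw f (fst A) (UNIV :: nat set)"
    and lt: "\<And>x y. x \<in> fst A \<Longrightarrow> y \<in> fst A \<Longrightarrow> (x, y) \<in> snd A \<longleftrightarrow> f x < f y"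
    using assms unfolding iso_to_def by blast
  have "inj (inv_into (fst A) f)"
    using inj_on_inv_into[of UNIV f "fst A"] bij_betw_imp_surj_on[OF f] by simp
  then show ?thesis
    unfolding iso_to_iff_order_isomorphic
    using order_isomorphic_trans[OF order_isomorphic_trans[OF
        order_isomorphic_sym[OF order_isomorphic_word_order] order_isomorphic_words_map[OF f lt]]
        words_order_isomorphic_omega_omega]
    by blast
qed

lemma word_order_converse: "word_order (fst S, (snd S)\<inverse>) = (fst (word_order S), (snd (word_order S))\<inverse>)"
  unfolding word_order_def using word_less_converse[of "\<lambda>a b. (a, b) \<in> snd S"] by auto

lemma iso_to_converse: "iso_to (fst S, (snd S)\<inverse>) C lt \<longleftrightarrow> iso_to S C (\<lambda>x y. lt y x)"
  unfolding iso_to_def by auto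

lemma word_order_iso_to_omega_omega_reverse:
  assumes "iso_to A (UNIV :: nat set) (>)"
  shows "iso_to (word_order A) omega_omega (\<lambda>f g. oo_less g f)"
proof -
  have "iso_to (fst A, (snd A)\<inverse>) (UNIV :: nat set) (<)"
    using assms unfolding iso_to_converse by simp
  then have "iso_to (word_order (fst A, (snd A)\<inverse>)) omega_omega oo_less"
    by (rule word_order_iso_to_omega_omega)
  then have "iso_to (fst (word_order A), (snd (word_order A))\<inverse>) omega_omega oo_less"
    unfolding word_order_converse .
  then show ?thesis unfolding iso_to_converse .
qed

lemma not_iso_to_order_and_reverse:
  assumes least: "z \<in> C" "\<And>y. y \<in> C \<Longrightarrow> y \<noteq> z \<Longrightarrow> lt z y"
    and no_greatest: "\<And>x. x \<in> C \<Longrightarrow> \<exists>y\<in>C. lt x y"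
    and asym: "\<And>x y. x \<in> C \<Longrightarrow> y \<in> C \<Longrightarrow> lt x y \<Longrightarrow> \<not> lt y x"
  shows "\<not> (iso_to S C lt \<and> iso_to S C (\<lambda>x y. lt y x))"
proof
  assume "iso_to S C lt \<and> iso_to S C (\<lambda>x y. lt y x)"
  then have "order_isomorphic C lt C (\<lambda>x y. lt y x)"
    unfolding iso_to_iff_order_isomorphic using order_isomorphic_sym order_isomorphic_trans
    by metis
  then obtain h where h: "bij_betw h C C" "\<forall>x\<in>C. \<forall>y\<in>C. lt x y \<longleftrightarrow> lt (h y) (h x)"
    unfolding order_isomorphic_def by blast
  have hz: "h z \<in> C" using h(1) least(1) bij_betwE by blast
  then obtain y' where y': "y' \<in> C" "lt (h z) y'" using no_greatest by blast
  then obtain y where y: "y \<in> C" "h y = y'" using h(1) by (metis bij_betw_imp_surj_on imageE)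
  have "y \<noteq> z"
  proof
    assume "y = z"
    then have "lt y' y'" using y y'(2) by simp
    then show False using asym y'(1) by blast
  qed
  then have "lt (h y) (h z)" using h(2) least y(1) by blast
  then have "lt y' (h z)" using y(2) by simp
  then show False using asym[OF hz y'(1) y'(2)] by blast
qed

lemma not_iso_to_nat_and_reverse:
  "\<not> (iso_to S (UNIV :: nat set) (<) \<and> iso_to S (UNIV :: nat set) (>))"
  by (rule not_iso_to_order_and_reverse[where z = 0]) auto

lemma not_iso_to_omega_omega_and_reverse:
  "\<not> (iso_to S omega_omega oo_less \<and> iso_to S omega_omega (\<lambda>f g. oo_less g f))"
proof (rule not_iso_to_order_and_reverse)
  show "(\<lambda>_. 0) \<in> omega_omega" unfolding omega_omega_def by simp
  show "oo_less (\<lambda>_. 0) f" if "f \<in> omega_omega" "f \<noteq> (\<lambda>_. 0)" for f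
    using oo_less_total[OF \<open>(\<lambda>_. 0) \<in> omega_omega\<close> that(1)] that(2)
    unfolding oo_less_def by auto
  show "\<exists>h\<in>omega_omega. oo_less f h" if "f \<in> omega_omega" for f
  proof (intro bexI)
    let ?N = "Suc (oo_degree f)"
    show "oo_less f (f(?N := 1))"
      unfolding oo_less_def using coeff_above_oo_degree[OF that, of ?N] by (intro exI[of _ ?N]) auto
    have "{k. (f(?N := 1)) k \<noteq> 0} \<subseteq> insert ?N {k. f k \<noteq> 0}" by auto
    moreover have "finite (insert ?N {k. f k \<noteq> 0})" using that unfolding omega_omega_def by simp
    ultimately show "f(?N := 1) \<in> omega_omega"
      unfolding omega_omega_def mem_Collect_eq by (rule finite_subset)
  qed
qed (rule oo_less_asym)

lemma struc_iso_iff_same_type: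
  assumes excl: "\<And>S. \<not> (iso_to S C lt \<and> iso_to S C lt')"
    and S: "S \<in> cls2 C lt C lt'" and T: "T \<in> cls2 C lt C lt'"
  shows "struc_iso S T \<longleftrightarrow> (iso_to S C lt \<longleftrightarrow> iso_to T C lt)"
proof -
  have transfer: "iso_to S C r" if "struc_iso S T" "iso_to T C r" for r
    using that unfolding struc_iso_iff_order_isomorphic iso_to_iff_order_isomorphic
    by (rule order_isomorphic_trans)
  have same: "struc_iso S T" if "iso_to S C r" "iso_to T C r" for r
    using that unfolding struc_iso_iff_order_isomorphic iso_to_iff_order_isomorphic
    by (blast intro: order_isomorphic_trans order_isomorphic_sym)
  have "iso_to S C lt \<or> iso_to S C lt'" "iso_to T C lt \<or> iso_to T C lt'"
    using S T unfolding cls2_def by blast+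
  then show ?thesis using excl transfer same by metis
qed

lemma word_order_cls2:
  assumes "A \<in> cls2 (UNIV :: nat set) (<) (UNIV :: nat set) (>)"
  shows "word_order A \<in> cls2 omega_omega oo_less omega_omega (\<lambda>f g. oo_less g f)"
    and "iso_to (word_order A) omega_omega oo_less \<longleftrightarrow> iso_to A (UNIV :: nat set) (<)"
proof -
  have A: "iso_to A (UNIV :: nat set) (<) \<or> iso_to A (UNIV :: nat set) (>)"
    using assms unfolding cls2_def by blast
  then show "word_order A \<in> cls2 omega_omega oo_less omega_omega (\<lambda>f g. oo_less g f)"
    using word_order_iso_to_omega_omega word_order_iso_to_omega_omega_reverse is_struc_word_order
    unfolding cls2_def by blast
  show "iso_to (word_order A) omega_omega oo_less \<longleftrightarrow> iso_to A (UNIV :: nat set) (<)"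
    using A word_order_iso_to_omega_omega word_order_iso_to_omega_omega_reverse
      not_iso_to_omega_omega_and_reverse by blast
qed

lemma computable_embeddingI:
  assumes "enum_op \<Gamma>" "\<And>A. A \<in> K0 \<Longrightarrow> enum_apply \<Gamma> (diag A) = diag (F A)"
    "\<And>A. A \<in> K0 \<Longrightarrow> F A \<in> K1"
    "\<And>A B. A \<in> K0 \<Longrightarrow> B \<in> K0 \<Longrightarrow> struc_iso A B \<longleftrightarrow> struc_iso (F A) (F B)"
  shows "computable_embedding \<Gamma> K0 K1"
  unfolding computable_embedding_def using assms diag_inj by metis

theorem proposition6p5:
  shows "cls2 (UNIV :: nat set) (<) (UNIV :: nat set) (>)
           \<le>\<^sub>c cls2 omega_omega oo_less omega_omega (\<lambda>f g. oo_less g f)"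
proof -
  have "computable_embedding Gamma (cls2 (UNIV :: nat set) (<) (UNIV :: nat set) (>))
      (cls2 omega_omega oo_less omega_omega (\<lambda>f g. oo_less g f))"
  proof (rule computable_embeddingI)
    show "enum_op Gamma" by (fact enum_op_Gamma)
    show "enum_apply Gamma (diag A) = diag (word_order A)" for A
      by (fact enum_apply_Gamma_diag)
    fix A B assume A: "A \<in> cls2 (UNIV :: nat set) (<) (UNIV :: nat set) (>)"
      and B: "B \<in> cls2 (UNIV :: nat set) (<) (UNIV :: nat set) (>)"
    show "word_order A \<in> cls2 omega_omega oo_less omega_omega (\<lambda>f g. oo_less g f)"
      by (rule word_order_cls2(1)[OF A])
    show "struc_iso A B \<longleftrightarrow> struc_iso (word_order A) (word_order B)"
      using struc_iso_iff_same_type[OF not_iso_to_nat_and_reverse A B]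
        struc_iso_iff_same_type[OF not_iso_to_omega_omega_and_reverse
          word_order_cls2(1)[OF A] word_order_cls2(1)[OF B]]
        word_order_cls2(2)[OF A] word_order_cls2(2)[OF B]
      by simp
  qed
  then show ?thesis unfolding c_reducible_def by blast
qed

end
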